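(* In the crystal $\mathfrak G_n^B$: (1) The vertices of the connected component $B(\mathfrak C_n\otimes0)$ are exactly the words $\mathfrak Cx$ with $\mathfrak C$ a spin column, $x\in\mathcal B_n$ and $x\vartriangle\mathfrak C$. (2) The vertices of the connected component $B(\mathfrak C_n\otimes1)$ are exactly the words $\mathfrak Cx$ with $\mathfrak C$ a spin column, $x\in\mathcal B_n$ and $x\not\vartriangle\mathfrak C$. (3) Let $\Psi:B(\mathfrak C_n\otimes0)\to B(\mathfrak C_n)$ and $\Psi':B(\mathfrak C_n\otimes1)\to B(1\otimes\mathfrak C_n)$ be the crystal isomorphisms. If $x\vartriangle\mathfrak C$ then $\Psi(\mathfrak Cx)=\mathfrak C'$, the spin column with $\mathrm{wt}(\mathfrak C')=\mathrm{wt}(\mathfrak C)+\mathrm{wt}(x)$. If $x\not\vartriangle\mathfrak C$ then $\Psi'(\mathfrak Cx)=x'\mathfrak C'$, where $x'=\min\{t\in\mathfrak C:t\succeq x\}$ if $x\succeq0$, $x'=\min(\{t\in\mathfrak C:t\succeq x\}\cup\{0\})$ if $x\preceq n$, and $\mathfrak C'$ is the spin column with $\mathrm{wt}(\mathfrak C')=\mathrm{wt}(\mathfrak C)+\mathrm{wt}(x)-\mathrm{wt}(x')$.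
   Context: Fix $n\ge2$; $\mathcal B_n=\{1\prec\cdots\prec n\prec0\prec\bar n\prec\cdots\prec\bar1\}$. Vector crystal: arrows $i\xrightarrow{i}i+1$, $\overline{i+1}\xrightarrow{i}\bar i$ ($i<n$), $n\xrightarrow{n}0\xrightarrow{n}\bar n$. Spin columns: sets of $n$ letters of $\mathcal B_n\setminus\{0\}$ containing exactly one of $i,\bar i$ for each $i=1..n$; they form the crystal $B(\Lambda_n^B)$ with $\tilde f_n$: replace $n$ by $\bar n$ (else $0$), $\tilde e_n$: replace $\bar n$ by $n$; for $i<n$, $\tilde f_i$: replace $i,\overline{i+1}$ by $i+1,\bar i$ (else $0$), $\tilde e_i$: the reverse. $\mathfrak G_n^B$ is the crystal of $\bigoplus_l(V\oplus V(\Lambda_n^B))^{\otimes l}$ whose vertices are words over $\mathcal B_n\cup\{\text{spin columns}\}$, a word being identified with the tensor product of its letters, with tensor rule $\tilde f_i(u\otimes v)=\tilde f_iu\otimes v$ if $\varphi_i(u)>\varepsilon_i(v)$, else $u\otimes\tilde f_iv$; $\tilde e_i(u\otimes v)=u\otimes\tilde e_iv$ if $\varphi_i(u)<\varepsilon_i(v)$, else $\tilde e_iu\otimes v$. $\mathfrak C_n$ is the spin column $\{1,\dots,n\}$; $B(v)$ denotes the connected component of the word $v$. Weights in coordinates $e_1,\dots,e_n$: $\mathrm{wt}(i)=e_i$, $\mathrm{wt}(\bar i)=-e_i$, $\mathrm{wt}(0)=0$, $\mathrm{wt}(\mathfrak C)=\frac12(\sum_{i\in\mathfrak C}e_i-\sum_{\bar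 i\in\mathfrak C}e_i)$. For a letter $x$ and a spin column $\mathfrak C$ with greatest letter $z$, $x\vartriangle\mathfrak C$ means $x\not\preceq z$. *)

theory Defs
  imports Complex_Main
begin

datatype letter = Pos nat | Zero | Neg nat
  (* Pos i = i,  Zero = 0,  Neg i = bar i *)

fun valid_letter :: "nat \<Rightarrow> letter \<Rightarrow> bool" where
  "valid_letter n (Pos i) = (1 \<le> i \<and> i \<le> n)"
| "valid_letter n Zero = True"
| "valid_letter n (Neg i) = (1 \<le> i \<and> i \<le> n)"

text \<open>Position in the total order of B_n; x precedes y iff rank x < rank y.\<close>
fun rank :: "nat \<Rightarrow> letter \<Rightarrow> nat" where
  "rank n (Pos i) = i"
| "rank n Zero = n + 1"
| "rank n (Neg i) = 2 * n + 2 - i"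

definition fL :: "nat \<Rightarrow> nat \<Rightarrow> letter \<Rightarrow> letter option" where
  "fL n i x =
    (if i = n then (case x of Pos j \<Rightarrow> if j = n then Some Zero else None
                            | Zero \<Rightarrow> Some (Neg n)
                            | Neg j \<Rightarrow> None)
     else if 1 \<le> i \<and> i < n then
       (case x of Pos j \<Rightarrow> if j = i then Some (Pos (i + 1)) else None
                | Zero \<Rightarrow> None
                | Neg j \<Rightarrow> if j = i + 1 then Some (Neg i) else None)
     else None)"

definition eL :: "nat \<Rightarrow> nat \<Rightarrow> letter \<Rightarrow> letter option" where
  "eL n i x =
    (if i = n then (case x of Pos j \<Rightarrow> None
                            | Zero \<Rightarrow> Some (Pos n)
                            | Neg j \<Rightarrow> if j = n then Some Zero else None)
     else if 1 \<le> i \<and> i < n then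
       (case x of Pos j \<Rightarrow> if j = i + 1 then Some (Pos i) else None
                | Zero \<Rightarrow> None
                | Neg j \<Rightarrow> if j = i then Some (Neg (i + 1)) else None)
     else None)"

definition is_spin :: "nat \<Rightarrow> letter set \<Rightarrow> bool" where
  "is_spin n C \<longleftrightarrow>
     (\<forall>x\<in>C. x \<noteq> Zero \<and> valid_letter n x) \<and>
     (\<forall>i\<in>{1..n}. (Pos i \<in> C) \<noteq> (Neg i \<in> C))"

definition fS :: "nat \<Rightarrow> nat \<Rightarrow> letter set \<Rightarrow> letter set option" where
  "fS n i C =
    (if i = n then (if Pos n \<in> C then Some (C - {Pos n} \<union> {Neg n}) else None)
     else if 1 \<le> i \<and> i < n then
       (if Pos i \<in> C \<and> Neg (i + 1) \<in> C
        then Some (C - {Pos i, Neg (i + 1)} \<union> {Pos (i + 1), Neg i}) else None)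
     else None)"

definition eS :: "nat \<Rightarrow> nat \<Rightarrow> letter set \<Rightarrow> letter set option" where
  "eS n i C =
    (if i = n then (if Neg n \<in> C then Some (C - {Neg n} \<union> {Pos n}) else None)
     else if 1 \<le> i \<and> i < n then
       (if Pos (i + 1) \<in> C \<and> Neg i \<in> C
        then Some (C - {Pos (i + 1), Neg i} \<union> {Pos i, Neg (i + 1)}) else None)
     else None)"

definition Cn :: "nat \<Rightarrow> letter set" where
  "Cn n = Pos ` {1..n}"

definition tri :: "nat \<Rightarrow> letter \<Rightarrow> letter set \<Rightarrow> bool" where
  "tri n x C \<longleftrightarrow> \<not> rank n x \<le> Max (rank n ` C)"

datatype gen = L letter | S "letter set"

type_synonym word = "gen list"

fun fG :: "nat \<Rightarrow> nat \<Rightarrow> gen \<Rightarrow> gen option" where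
  "fG n i (L x) = map_option L (fL n i x)"
| "fG n i (S C) = map_option S (fS n i C)"

fun eG :: "nat \<Rightarrow> nat \<Rightarrow> gen \<Rightarrow> gen option" where
  "eG n i (L x) = map_option L (eL n i x)"
| "eG n i (S C) = map_option S (eS n i C)"

fun opow :: "('a \<Rightarrow> 'a option) \<Rightarrow> nat \<Rightarrow> 'a \<Rightarrow> 'a option" where
  "opow g 0 x = Some x"
| "opow g (Suc k) x = Option.bind (opow g k x) g"

definition epsG :: "nat \<Rightarrow> nat \<Rightarrow> gen \<Rightarrow> nat" where
  "epsG n i b = (GREATEST k. opow (eG n i) k b \<noteq> None)"

definition phiG :: "nat \<Rightarrow> nat \<Rightarrow> gen \<Rightarrow> nat" where
  "phiG n i b = (GREATEST k. opow (fG n i) k b \<noteq> None)"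

text \<open>Words u v w... identified with u \<otimes> (v \<otimes> (w \<otimes> ...)) (tensor product is
  associative); tensor rule as in the paper.\<close>
fun epsW :: "nat \<Rightarrow> nat \<Rightarrow> word \<Rightarrow> nat" where
  "epsW n i [] = 0"
| "epsW n i (u # v) = epsG n i u + (epsW n i v - phiG n i u)"

fun phiW :: "nat \<Rightarrow> nat \<Rightarrow> word \<Rightarrow> nat" where
  "phiW n i [] = 0"
| "phiW n i (u # v) = phiW n i v + (phiG n i u - epsW n i v)"

fun fW :: "nat \<Rightarrow> nat \<Rightarrow> word \<Rightarrow> word option" where
  "fW n i [] = None"
| "fW n i (u # v) =
     (if phiG n i u > epsW n i v then map_option (\<lambda>u'. u' # v) (fG n i u)
      else map_option (\<lambda>v'. u # v') (fW n i v))"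

fun eW :: "nat \<Rightarrow> nat \<Rightarrow> word \<Rightarrow> word option" where
  "eW n i [] = None"
| "eW n i (u # v) =
     (if phiG n i u < epsW n i v then map_option (\<lambda>v'. u # v') (eW n i v)
      else map_option (\<lambda>u'. u' # v) (eG n i u))"

fun wtL :: "letter \<Rightarrow> nat \<Rightarrow> real" where
  "wtL (Pos i) j = (if j = i then 1 else 0)"
| "wtL Zero j = 0"
| "wtL (Neg i) j = (if j = i then -1 else 0)"

definition wtS :: "letter set \<Rightarrow> nat \<Rightarrow> real" where
  "wtS C j = (if Pos j \<in> C then 1/2 else if Neg j \<in> C then -1/2 else 0)"

fun wtG :: "gen \<Rightarrow> nat \<Rightarrow> real" where
  "wtG (L x) = wtL x"
| "wtG (S C) = wtS C"

definition wtW :: "word \<Rightarrow> nat \<Rightarrow> real" where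
  "wtW w j = sum_list (map (\<lambda>g. wtG g j) w)"

definition crystal_edges :: "nat \<Rightarrow> (word \<times> word) set" where
  "crystal_edges n = {(w, w'). \<exists>i\<in>{1..n}. fW n i w = Some w' \<or> eW n i w = Some w'}"

definition component :: "nat \<Rightarrow> word \<Rightarrow> word set" where
  "component n v = {w. (v, w) \<in> (crystal_edges n)\<^sup>*}"

definition crystal_iso :: "nat \<Rightarrow> word set \<Rightarrow> word set \<Rightarrow> (word \<Rightarrow> word) \<Rightarrow> bool" where
  "crystal_iso n A B \<Psi> \<longleftrightarrow> bij_betw \<Psi> A B \<and>
     (\<forall>w\<in>A. wtW (\<Psi> w) = wtW w \<and>
        (\<forall>i\<in>{1..n}. fW n i (\<Psi> w) = map_option \<Psi> (fW n i w) \<and>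
                     eW n i (\<Psi> w) = map_option \<Psi> (eW n i w)))"

end

theory Submission
  imports Defs
begin

text \<open>
  Every word C x of a spin column and a letter is joined by e-arrows to a highest weight word,
  since each e_i lowers the total rank of the letters, and the only highest weight words of this
  shape are Cn n 0 and Cn n 1. Both f_i and e_i preserve the condition x \<triangle> C, so the words
  split into the two components according to it.

  On the first component all weights are weights of spin columns. The spin representation is
  minuscule, so there \<phi>_i is determined by the weight, and sending C x to the spin column of the
  same weight commutes with every f_i. On the second component, C x \<mapsto> x' C' commutes with
  every f_i by a case analysis on how f_i acts on C x; the column of the image is determined by
  its weight, so only the letter x' has to be followed.

  A weight-preserving map that commutes with the f_i on a component with a unique highest weight
  is an isomorphism onto the component of the image, and isomorphisms out of such a component are
  unique.
\<close>

section \<open>Crystal operators on letters, spin columns and words\<close>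

lemma opow_None_mono: "opow g k x = None \<Longrightarrow> k \<le> m \<Longrightarrow> opow g m x = None"
  by (induction m) (auto simp: le_Suc_eq)

lemma Greatest_opow_eq:
  assumes "opow g m x \<noteq> None" "opow g (Suc m) x = None"
  shows "(GREATEST k. opow g k x \<noteq> None) = m"
proof (rule Greatest_equality)
  fix k assume "opow g k x \<noteq> None"
  then show "k \<le> m" using opow_None_mono[OF assms(2), of k] by (cases "k \<le> m") auto
qed fact

lemma Greatest_opow_short:
  assumes "opow g 3 x = None"
  shows "(GREATEST k. opow g k x \<noteq> None) =
     (if g x = None then 0 else if Option.bind (g x) g = None then 1 else 2)"
  using assms Greatest_opow_eq[of g 0 x] Greatest_opow_eq[of g 1 x] Greatest_opow_eq[of g 2 x]
  by (auto simp: numeral_eq_Suc)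

definition phiL :: "nat \<Rightarrow> nat \<Rightarrow> letter \<Rightarrow> nat" where
  "phiL n i x = (if i = n then (case x of Pos j \<Rightarrow> if j = n then 2 else 0 | Zero \<Rightarrow> 1 | Neg j \<Rightarrow> 0)
     else if 1 \<le> i \<and> i < n then (case x of Pos j \<Rightarrow> if j = i then 1 else 0 | Zero \<Rightarrow> 0
        | Neg j \<Rightarrow> if j = i + 1 then 1 else 0) else 0)"

definition epsL :: "nat \<Rightarrow> nat \<Rightarrow> letter \<Rightarrow> nat" where
  "epsL n i x = (if i = n then (case x of Pos j \<Rightarrow> 0 | Zero \<Rightarrow> 1 | Neg j \<Rightarrow> if j = n then 2 else 0)
     else if 1 \<le> i \<and> i < n then (case x of Pos j \<Rightarrow> if j = i + 1 then 1 else 0 | Zero \<Rightarrow> 0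
        | Neg j \<Rightarrow> if j = i then 1 else 0) else 0)"

definition phiS :: "nat \<Rightarrow> nat \<Rightarrow> letter set \<Rightarrow> nat" where
  "phiS n i C = (if i = n then (if Pos n \<in> C then 1 else 0)
     else if 1 \<le> i \<and> i < n then (if Pos i \<in> C \<and> Neg (i + 1) \<in> C then 1 else 0) else 0)"

definition epsS :: "nat \<Rightarrow> nat \<Rightarrow> letter set \<Rightarrow> nat" where
  "epsS n i C = (if i = n then (if Neg n \<in> C then 1 else 0)
     else if 1 \<le> i \<and> i < n then (if Pos (i + 1) \<in> C \<and> Neg i \<in> C then 1 else 0) else 0)"

lemma phiG_L [simp]: "phiG n i (L x) = phiL n i x"
  unfolding phiG_def
  by (subst Greatest_opow_short)
    (auto simp: numeral_eq_Suc fL_def phiL_def split: letter.splits if_splits)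

lemma epsG_L [simp]: "epsG n i (L x) = epsL n i x"
  unfolding epsG_def
  by (subst Greatest_opow_short)
    (auto simp: numeral_eq_Suc eL_def epsL_def split: letter.splits if_splits)

lemma phiG_S [simp]: "phiG n i (S C) = phiS n i C"
  unfolding phiG_def
  by (subst Greatest_opow_short) (auto simp: numeral_eq_Suc fS_def phiS_def split: if_splits)

lemma epsG_S [simp]: "epsG n i (S C) = epsS n i C"
  unfolding epsG_def
  by (subst Greatest_opow_short) (auto simp: numeral_eq_Suc eS_def epsS_def split: if_splits)

lemma spin_Pos_iff_Neg_notin: "is_spin n C \<Longrightarrow> 1 \<le> j \<Longrightarrow> j \<le> n \<Longrightarrow> Pos j \<in> C \<longleftrightarrow> Neg j \<notin> C"
  unfolding is_spin_def by auto

lemma spin_valid_letter: "is_spin n C \<Longrightarrow> t \<in> C \<Longrightarrow> valid_letter n t"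
  unfolding is_spin_def by auto

lemma spin_Zero_notin: "is_spin n C \<Longrightarrow> Zero \<notin> C"
  unfolding is_spin_def by auto

lemma spin_finite: "is_spin n C \<Longrightarrow> finite C"
proof -
  assume "is_spin n C"
  then have "C \<subseteq> Pos ` {1..n} \<union> Neg ` {1..n}"
    by (auto simp: is_spin_def elim!: valid_letter.elims)
  then show ?thesis by (rule finite_subset) simp
qed

lemma fS_spin: "is_spin n C \<Longrightarrow> fS n i C = Some C' \<Longrightarrow> is_spin n C'"
  unfolding fS_def is_spin_def by (auto split: if_splits)

lemma eS_spin: "is_spin n C \<Longrightarrow> eS n i C = Some C' \<Longrightarrow> is_spin n C'"
  unfolding eS_def is_spin_def by (auto split: if_splits)

lemma ops_below_n:
  assumes "1 \<le> i" "i < n"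
  shows "phiS n i E = (if Pos i \<in> E \<and> Neg (i + 1) \<in> E then 1 else 0)"
    "epsS n i E = (if Pos (i + 1) \<in> E \<and> Neg i \<in> E then 1 else 0)"
    "phiL n i z = (if z = Pos i \<or> z = Neg (i + 1) then 1 else 0)"
    "epsL n i z = (if z = Pos (i + 1) \<or> z = Neg i then 1 else 0)"
    "fS n i E = (if Pos i \<in> E \<and> Neg (i + 1) \<in> E
                 then Some (insert (Pos (i + 1)) (insert (Neg i) (E - {Pos i, Neg (i + 1)})))
                 else None)"
    "eS n i E = (if Pos (i + 1) \<in> E \<and> Neg i \<in> E
                 then Some (insert (Pos i) (insert (Neg (i + 1)) (E - {Pos (i + 1), Neg i})))
                 else None)"
    "fL n i z = (if z = Pos i then Some (Pos (i + 1))
                 else if z = Neg (i + 1) then Some (Neg i) else None)"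
    "eL n i z = (if z = Pos (i + 1) then Some (Pos i)
                 else if z = Neg i then Some (Neg (i + 1)) else None)"
  using assms
  by (auto simp: phiS_def epsS_def phiL_def epsL_def fS_def eS_def fL_def eL_def
      split: letter.splits)

lemma ops_at_n:
  assumes "1 \<le> n"
  shows "phiS n n E = (if Pos n \<in> E then 1 else 0)"
    "epsS n n E = (if Neg n \<in> E then 1 else 0)"
    "phiL n n z = (if z = Pos n then 2 else if z = Zero then 1 else 0)"
    "epsL n n z = (if z = Neg n then 2 else if z = Zero then 1 else 0)"
    "fS n n E = (if Pos n \<in> E then Some (insert (Neg n) (E - {Pos n})) else None)"
    "eS n n E = (if Neg n \<in> E then Some (insert (Pos n) (E - {Neg n})) else None)"
    "fL n n z = (if z = Pos n then Some Zero else if z = Zero then Some (Neg n) else None)"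
    "eL n n z = (if z = Neg n then Some Zero else if z = Zero then Some (Pos n) else None)"
  using assms
  by (auto simp: phiS_def epsS_def phiL_def epsL_def fS_def eS_def fL_def eL_def
      split: letter.splits)

lemma rank_eq_iff: "valid_letter n a \<Longrightarrow> valid_letter n b \<Longrightarrow> rank n a = rank n b \<longleftrightarrow> a = b"
  by (cases a; cases b) auto

lemma fL_rank: "fL n i x = Some x' \<Longrightarrow> i \<in> {1..n} \<Longrightarrow> rank n x' = rank n x + 1"
  by (auto simp: fL_def split: letter.splits if_splits)

lemma eL_rank: "eL n i x = Some x' \<Longrightarrow> i \<in> {1..n} \<Longrightarrow> rank n x' + 1 = rank n x"
  by (auto simp: eL_def split: letter.splits if_splits)

fun valid_gen :: "nat \<Rightarrow> gen \<Rightarrow> bool" where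
  "valid_gen n (L x) = valid_letter n x"
| "valid_gen n (S C) = is_spin n C"

abbreviation valid_word :: "nat \<Rightarrow> word \<Rightarrow> bool" where
  "valid_word n \<equiv> list_all (valid_gen n)"

definition simple_root :: "nat \<Rightarrow> nat \<Rightarrow> nat \<Rightarrow> real" where
  "simple_root n i j = (if i = n then (if j = n then 1 else 0)
                        else if j = i then 1 else if j = i + 1 then -1 else 0)"

definition coroot_pairing :: "nat \<Rightarrow> nat \<Rightarrow> (nat \<Rightarrow> real) \<Rightarrow> real" where
  "coroot_pairing n i W = (if i = n then 2 * W n else W i - W (i + 1))"

lemma fG_eq_None_iff: "fG n i g = None \<longleftrightarrow> phiG n i g = 0"
  by (cases g) (auto simp: phiL_def fL_def phiS_def fS_def split: letter.splits)

lemma eG_eq_None_iff: "eG n i g = None \<longleftrightarrow> epsG n i g = 0"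
  by (cases g) (auto simp: epsL_def eL_def epsS_def eS_def split: letter.splits)

lemma fL_Some:
  assumes "valid_letter n x" "fL n i x = Some x'" "i \<in> {1..n}"
  shows "valid_letter n x' \<and> eL n i x' = Some x \<and> phiL n i x' = phiL n i x - 1 \<and>
         epsL n i x' = epsL n i x + 1 \<and> wtL x' = (\<lambda>j. wtL x j - simple_root n i j)"
  using assms
  by (cases x) (auto simp: phiL_def epsL_def fL_def eL_def simple_root_def fun_eq_iff
      split: if_splits)

lemma eL_Some:
  assumes "valid_letter n x" "eL n i x = Some x'" "i \<in> {1..n}"
  shows "valid_letter n x' \<and> fL n i x' = Some x \<and> epsL n i x' = epsL n i x - 1 \<and>
         phiL n i x' = phiL n i x + 1 \<and> wtL x' = (\<lambda>j. wtL x j + simple_root n i j)"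
  using assms
  by (cases x) (auto simp: phiL_def epsL_def fL_def eL_def simple_root_def fun_eq_iff
      split: if_splits)

lemma fS_Some:
  assumes spin: "is_spin n C" and f: "fS n i C = Some C'" and i: "i \<in> {1..n}"
  shows "is_spin n C' \<and> eS n i C' = Some C \<and> phiS n i C' = phiS n i C - 1 \<and>
         epsS n i C' = epsS n i C + 1 \<and> wtS C' = (\<lambda>j. wtS C j - simple_root n i j)"
proof (cases "i = n")
  case True
  then have "Pos n \<in> C" "Neg n \<notin> C" "C' = insert (Neg n) (C - {Pos n})"
    using f spin_Pos_iff_Neg_notin[OF spin, of n] i by (auto simp: fS_def split: if_splits)
  with True show ?thesis using fS_spin[OF spin f]
    by (auto simp: eS_def phiS_def epsS_def wtS_def simple_root_def fun_eq_iff)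
next
  case False
  then have "Pos i \<in> C" "Neg (i + 1) \<in> C" "Neg i \<notin> C" "Pos (i + 1) \<notin> C"
    "C' = insert (Pos (i + 1)) (insert (Neg i) (C - {Pos i, Neg (i + 1)}))"
    using f i spin_Pos_iff_Neg_notin[OF spin, of i] spin_Pos_iff_Neg_notin[OF spin, of "i + 1"]
    by (auto simp: fS_def split: if_splits)
  with False i show ?thesis using fS_spin[OF spin f]
    by (auto simp: eS_def phiS_def epsS_def wtS_def simple_root_def fun_eq_iff)
qed

lemma eS_Some:
  assumes spin: "is_spin n C" and e: "eS n i C = Some C'" and i: "i \<in> {1..n}"
  shows "is_spin n C' \<and> fS n i C' = Some C \<and> epsS n i C' = epsS n i C - 1 \<and>
         phiS n i C' = phiS n i C + 1 \<and> wtS C' = (\<lambda>j. wtS C j + simple_root n i j)"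
proof (cases "i = n")
  case True
  then have "Neg n \<in> C" "Pos n \<notin> C" "C' = insert (Pos n) (C - {Neg n})"
    using e spin_Pos_iff_Neg_notin[OF spin, of n] i by (auto simp: eS_def split: if_splits)
  with True show ?thesis using eS_spin[OF spin e]
    by (auto simp: fS_def phiS_def epsS_def wtS_def simple_root_def fun_eq_iff)
next
  case False
  then have "Pos (i + 1) \<in> C" "Neg i \<in> C" "Pos i \<notin> C" "Neg (i + 1) \<notin> C"
    "C' = insert (Pos i) (insert (Neg (i + 1)) (C - {Pos (i + 1), Neg i}))"
    using e i spin_Pos_iff_Neg_notin[OF spin, of i] spin_Pos_iff_Neg_notin[OF spin, of "i + 1"]
    by (auto simp: eS_def split: if_splits)
  with False i show ?thesis using eS_spin[OF spin e]
    by (auto simp: fS_def phiS_def epsS_def wtS_def simple_root_def fun_eq_iff)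
qed

lemma fG_Some:
  assumes "valid_gen n g" "fG n i g = Some g'" "i \<in> {1..n}"
  shows "valid_gen n g' \<and> eG n i g' = Some g \<and> phiG n i g' = phiG n i g - 1 \<and>
         epsG n i g' = epsG n i g + 1 \<and> wtG g' = (\<lambda>j. wtG g j - simple_root n i j)"
  using assms fL_Some fS_Some by (cases g) auto

lemma eG_Some:
  assumes "valid_gen n g" "eG n i g = Some g'" "i \<in> {1..n}"
  shows "valid_gen n g' \<and> fG n i g' = Some g \<and> epsG n i g' = epsG n i g - 1 \<and>
         phiG n i g' = phiG n i g + 1 \<and> wtG g' = (\<lambda>j. wtG g j + simple_root n i j)"
  using assms eL_Some eS_Some by (cases g) auto

lemma phiG_minus_epsG:
  assumes "valid_gen n g" "i \<in> {1..n}"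
  shows "real (phiG n i g) - real (epsG n i g) = coroot_pairing n i (wtG g)"
proof (cases g)
  case (L x)
  with assms show ?thesis
    by (auto simp: phiL_def epsL_def coroot_pairing_def split: letter.splits)
next
  case (S C)
  then have "is_spin n C" using assms by simp
  with assms S show ?thesis
    using spin_Pos_iff_Neg_notin[of n C i] spin_Pos_iff_Neg_notin[of n C "i + 1"]
    by (auto simp: phiS_def epsS_def coroot_pairing_def wtS_def)
qed

lemma wtW_Nil [simp]: "wtW [] = (\<lambda>j. 0)"
  by (simp add: wtW_def fun_eq_iff)

lemma wtW_Cons [simp]: "wtW (u # v) = (\<lambda>j. wtG u j + wtW v j)"
  by (simp add: wtW_def fun_eq_iff)

lemma fW_eq_None_iff: "fW n i w = None \<longleftrightarrow> phiW n i w = 0"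
  by (induction w) (auto simp: fG_eq_None_iff)

lemma eW_eq_None_iff: "eW n i w = None \<longleftrightarrow> epsW n i w = 0"
  by (induction w) (auto simp: eG_eq_None_iff)

lemma fW_Some:
  assumes "valid_word n w" "fW n i w = Some w'" "i \<in> {1..n}"
  shows "valid_word n w' \<and> eW n i w' = Some w \<and> phiW n i w' = phiW n i w - 1 \<and>
         epsW n i w' = epsW n i w + 1 \<and> wtW w' = (\<lambda>j. wtW w j - simple_root n i j)"
  using assms(1,2)
proof (induction w arbitrary: w')
  case (Cons u v)
  show ?case
  proof (cases "phiG n i u > epsW n i v")
    case True
    then obtain u' where "fG n i u = Some u'" "w' = u' # v" using Cons.prems by auto
    with True Cons.prems show ?thesis using fG_Some[of n u i u'] assms(3) by auto
  next
    case False
    then obtain v' where v': "fW n i v = Some v'" "w' = u # v'" using Cons.prems by auto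
    then have "phiW n i v > 0" using fW_eq_None_iff[of n i v] by auto
    with False v' Cons show ?thesis by auto
  qed
qed simp

lemma eW_Some:
  assumes "valid_word n w" "eW n i w = Some w'" "i \<in> {1..n}"
  shows "valid_word n w' \<and> fW n i w' = Some w \<and> epsW n i w' = epsW n i w - 1 \<and>
         phiW n i w' = phiW n i w + 1 \<and> wtW w' = (\<lambda>j. wtW w j + simple_root n i j)"
  using assms(1,2)
proof (induction w arbitrary: w')
  case (Cons u v)
  show ?case
  proof (cases "phiG n i u < epsW n i v")
    case True
    then obtain v' where "eW n i v = Some v'" "w' = u # v'" using Cons.prems by auto
    with True Cons show ?thesis by auto
  next
    case False
    then obtain u' where u': "eG n i u = Some u'" "w' = u' # v" using Cons.prems by auto
    then have "epsG n i u > 0" using eG_eq_None_iff[of n i u] by auto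
    with False u' Cons.prems show ?thesis using eG_Some[of n u i u'] assms(3) by auto
  qed
qed simp

lemma phiW_minus_epsW:
  assumes "valid_word n w" "i \<in> {1..n}"
  shows "real (phiW n i w) - real (epsW n i w) = coroot_pairing n i (wtW w)"
  using assms(1)
proof (induction w)
  case Nil
  then show ?case by (simp add: coroot_pairing_def)
next
  case (Cons u v)
  have "real (phiG n i u - epsW n i v) - real (epsW n i v - phiG n i u)
      = real (phiG n i u) - real (epsW n i v)"
    by (cases "phiG n i u \<le> epsW n i v") (auto simp: of_nat_diff)
  with Cons phiG_minus_epsG[of n u i] assms(2) show ?case
    by (auto simp: coroot_pairing_def algebra_simps)
qed

lemma fW_pair:
  "fW n i [u, v] = (if epsG n i v < phiG n i u then map_option (\<lambda>u'. [u', v]) (fG n i u)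
                    else map_option (\<lambda>v'. [u, v']) (fG n i v))"
  using fG_eq_None_iff[of n i v] by (auto simp: option.map_comp comp_def)

lemma eW_pair:
  "eW n i [u, v] = (if phiG n i u < epsG n i v then map_option (\<lambda>v'. [u, v']) (eG n i v)
                    else map_option (\<lambda>u'. [u', v]) (eG n i u))"
  by (simp add: option.map_comp comp_def)

lemma fW_spin_letter:
  "fW n i [S C, L x] = (if epsL n i x < phiS n i C then map_option (\<lambda>C'. [S C', L x]) (fS n i C)
                        else map_option (\<lambda>x'. [S C, L x']) (fL n i x))"
  unfolding fW_pair by (simp add: option.map_comp comp_def)

lemma eW_spin_letter:
  "eW n i [S C, L x] = (if phiS n i C < epsL n i x then map_option (\<lambda>x'. [S C, L x']) (eL n i x)
                        else map_option (\<lambda>C'. [S C', L x]) (eS n i C))"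
  unfolding eW_pair by (simp add: option.map_comp comp_def)

lemma fW_letter_spin:
  "fW n i [L x, S C] = (if epsS n i C < phiL n i x then map_option (\<lambda>x'. [L x', S C]) (fL n i x)
                        else map_option (\<lambda>C'. [L x, S C']) (fS n i C))"
  unfolding fW_pair by (simp add: option.map_comp comp_def)

section \<open>Connected components and crystal isomorphisms\<close>

definition crystal_closed :: "nat \<Rightarrow> word set \<Rightarrow> bool" where
  "crystal_closed n X \<longleftrightarrow> crystal_edges n `` X \<subseteq> X"

lemma crystal_closedI:
  assumes "\<And>w i w'. w \<in> X \<Longrightarrow> i \<in> {1..n} \<Longrightarrow> fW n i w = Some w' \<Longrightarrow> w' \<in> X"
    and "\<And>w i w'. w \<in> X \<Longrightarrow> i \<in> {1..n} \<Longrightarrow> eW n i w = Some w' \<Longrightarrow> w' \<in> X"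
  shows "crystal_closed n X"
  using assms unfolding crystal_closed_def crystal_edges_def by blast

lemma crystal_closed_fW:
  "crystal_closed n X \<Longrightarrow> w \<in> X \<Longrightarrow> i \<in> {1..n} \<Longrightarrow> fW n i w = Some w' \<Longrightarrow> w' \<in> X"
  unfolding crystal_closed_def crystal_edges_def by blast

lemma crystal_closed_eW:
  "crystal_closed n X \<Longrightarrow> w \<in> X \<Longrightarrow> i \<in> {1..n} \<Longrightarrow> eW n i w = Some w' \<Longrightarrow> w' \<in> X"
  unfolding crystal_closed_def crystal_edges_def by blast

lemma crystal_edges_sym:
  assumes "valid_word n w" "(w, w') \<in> crystal_edges n"
  shows "(w', w) \<in> crystal_edges n"
  using assms fW_Some eW_Some unfolding crystal_edges_def by blast

lemma crystal_closed_Diff: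
  assumes "crystal_closed n X" "crystal_closed n P" "\<forall>w\<in>X. valid_word n w"
  shows "crystal_closed n (X - P)"
  using assms crystal_edges_sym unfolding crystal_closed_def by blast

lemma component_self: "v \<in> component n v"
  by (simp add: component_def)

lemma component_step: "w \<in> component n v \<Longrightarrow> (w, w') \<in> crystal_edges n \<Longrightarrow> w' \<in> component n v"
  unfolding component_def by (simp add: rtrancl_into_rtrancl)

lemma component_fW: "w \<in> component n v \<Longrightarrow> i \<in> {1..n} \<Longrightarrow> fW n i w = Some w' \<Longrightarrow> w' \<in> component n v"
  by (erule component_step) (auto simp: crystal_edges_def)

lemma component_eW: "w \<in> component n v \<Longrightarrow> i \<in> {1..n} \<Longrightarrow> eW n i w = Some w' \<Longrightarrow> w' \<in> component n v"
  by (erule component_step) (auto simp: crystal_edges_def)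

lemma component_subset: "v \<in> X \<Longrightarrow> crystal_closed n X \<Longrightarrow> component n v \<subseteq> X"
  unfolding component_def crystal_closed_def
  using Image_closed_trancl[of "crystal_edges n" X] by blast

lemma valid_word_component:
  assumes "valid_word n v" "w \<in> component n v"
  shows "valid_word n w"
proof -
  have "crystal_closed n {w. valid_word n w}"
    by (rule crystal_closedI) (auto dest: fW_Some eW_Some)
  then show ?thesis using assms component_subset[of v _ n] by blast
qed

lemma component_induct [consumes 1, case_names self edge]:
  assumes "w \<in> component n v" "P v"
    and "\<And>y i z. y \<in> component n v \<Longrightarrow> i \<in> {1..n} \<Longrightarrow> fW n i y = Some z \<or> eW n i y = Some z
          \<Longrightarrow> P y \<Longrightarrow> P z"
  shows "P w"
proof -
  have "(v, w) \<in> (crystal_edges n)\<^sup>*" using assms(1) by (simp add: component_def)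
  then show ?thesis
    by induction (use assms in \<open>auto simp: component_def crystal_edges_def\<close>)
qed

definition highest_weight :: "nat \<Rightarrow> word \<Rightarrow> bool" where
  "highest_weight n w \<longleftrightarrow> (\<forall>i\<in>{1..n}. eW n i w = None)"

fun gen_rank :: "nat \<Rightarrow> gen \<Rightarrow> nat" where
  "gen_rank n (L x) = rank n x"
| "gen_rank n (S C) = sum (rank n) C"

lemma sum_insert_remove:
  fixes f :: "'a \<Rightarrow> 'b::comm_monoid_add"
  assumes "finite C" "a \<in> C" "b \<notin> C"
  shows "sum f (insert b (C - {a})) + f a = sum f C + f b"
  using assms by (simp add: sum.remove add.commute add.left_commute)

lemma eS_rank_sum_less:
  assumes spin: "is_spin n C" and e: "eS n i C = Some C'" and i: "i \<in> {1..n}"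
  shows "sum (rank n) C' < sum (rank n) C"
proof (cases "i = n")
  case True
  then have "Neg n \<in> C" "Pos n \<notin> C" "C' = insert (Pos n) (C - {Neg n})"
    using e spin_Pos_iff_Neg_notin[OF spin, of n] i by (auto simp: eS_def split: if_splits)
  then show ?thesis using sum_insert_remove[OF spin_finite[OF spin], of "Neg n" "Pos n" "rank n"] i
    by simp
next
  case False
  define C\<^sub>1 where "C\<^sub>1 = insert (Pos i) (C - {Pos (i + 1)})"
  have C: "Pos (i + 1) \<in> C" "Neg i \<in> C" "Pos i \<notin> C" "Neg (i + 1) \<notin> C"
    "C' = insert (Neg (i + 1)) (C\<^sub>1 - {Neg i})"
    using e i False spin_Pos_iff_Neg_notin[OF spin, of i]
      spin_Pos_iff_Neg_notin[OF spin, of "i + 1"]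
    by (auto simp: eS_def C\<^sub>1_def split: if_splits)
  have "sum (rank n) C\<^sub>1 + (i + 1) = sum (rank n) C + i"
    using sum_insert_remove[OF spin_finite[OF spin], of "Pos (i + 1)" "Pos i" "rank n"] C
    by (simp add: C\<^sub>1_def)
  moreover have "sum (rank n) C' + rank n (Neg i) = sum (rank n) C\<^sub>1 + rank n (Neg (i + 1))"
    using sum_insert_remove[of C\<^sub>1 "Neg i" "Neg (i + 1)" "rank n"] C spin_finite[OF spin]
    by (simp add: C\<^sub>1_def)
  ultimately show ?thesis using i by simp arith
qed

lemma eG_gen_rank_less:
  assumes "valid_gen n g" "eG n i g = Some g'" "i \<in> {1..n}"
  shows "gen_rank n g' < gen_rank n g"
  using assms eS_rank_sum_less
  by (cases g) (auto simp: eL_def split: if_splits letter.splits)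

lemma eW_gen_rank_less:
  assumes "valid_word n w" "eW n i w = Some w'" "i \<in> {1..n}"
  shows "(\<Sum>g\<leftarrow>w'. gen_rank n g) < (\<Sum>g\<leftarrow>w. gen_rank n g)"
  using assms(1,2)
proof (induction w arbitrary: w')
  case (Cons u v)
  then show ?case using eG_gen_rank_less[OF _ _ assms(3)] by (auto split: if_splits)
qed simp

lemma highest_weight_reachable:
  assumes closed: "crystal_closed n X" and "w \<in> X" "valid_word n w"
  shows "\<exists>u\<in>X. highest_weight n u \<and> w \<in> component n u"
  using assms(2,3)
proof (induction "\<Sum>g\<leftarrow>w. gen_rank n g" arbitrary: w rule: less_induct)
  case less
  show ?case
  proof (cases "highest_weight n w")
    case True
    then show ?thesis using less.prems component_self by blast
  next
    case False
    then obtain i w' where i: "i \<in> {1..n}" and e: "eW n i w = Some w'"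
      by (auto simp: highest_weight_def)
    have w': "valid_word n w'" "fW n i w' = Some w" using eW_Some[OF less.prems(2) e i] by auto
    have "w' \<in> X" using crystal_closed_eW[OF closed less.prems(1) i e] .
    then obtain u where "u \<in> X" "highest_weight n u" "w' \<in> component n u"
      using less.hyps[OF eW_gen_rank_less[OF less.prems(2) e i]] w'(1) by blast
    then show ?thesis using component_fW[OF _ i w'(2)] by blast
  qed
qed

lemma crystal_iso_unique:
  assumes iso1: "crystal_iso n (component n v) Y \<Psi>\<^sub>1"
    and iso2: "crystal_iso n (component n v) Y \<Psi>\<^sub>2"
    and hw: "highest_weight n v"
    and unique: "\<And>w. w \<in> component n v \<Longrightarrow> highest_weight n w \<Longrightarrow> w = v"
    and w: "w \<in> component n v"
  shows "\<Psi>\<^sub>1 w = \<Psi>\<^sub>2 w"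
  using w
proof (induction rule: component_induct)
  case self
  have "\<Psi>\<^sub>2 v \<in> Y" using iso2 component_self by (auto simp: crystal_iso_def bij_betw_def)
  then obtain u where u: "u \<in> component n v" "\<Psi>\<^sub>1 u = \<Psi>\<^sub>2 v"
    using iso1 by (auto simp: crystal_iso_def bij_betw_def)
  have "highest_weight n u"
    unfolding highest_weight_def
  proof
    fix i assume i: "i \<in> {1..n}"
    have "eW n i (\<Psi>\<^sub>2 v) = None"
      using iso2 component_self i hw by (auto simp: crystal_iso_def highest_weight_def)
    then show "eW n i u = None" using iso1 u i unfolding crystal_iso_def by force
  qed
  then show ?case using unique u by auto
next
  case (edge y i z)
  have commute: "fW n i (\<Psi>\<^sub>k y) = map_option \<Psi>\<^sub>k (fW n i y) \<and>
      eW n i (\<Psi>\<^sub>k y) = map_option \<Psi>\<^sub>k (eW n i y)"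
    if "crystal_iso n (component n v) Y \<Psi>\<^sub>k" for \<Psi>\<^sub>k
    using that edge(1,2) by (simp add: crystal_iso_def)
  from commute[OF iso1] commute[OF iso2] edge(3,4) show ?case by auto
qed

locale fW_equivariant =
  fixes n :: nat and v :: word and \<Psi> :: "word \<Rightarrow> word"
  assumes valid_source: "valid_word n v"
    and valid_image: "w \<in> component n v \<Longrightarrow> valid_word n (\<Psi> w)"
    and wtW_image: "w \<in> component n v \<Longrightarrow> wtW (\<Psi> w) = wtW w"
    and fW_commute: "w \<in> component n v \<Longrightarrow> i \<in> {1..n} \<Longrightarrow> fW n i (\<Psi> w) = map_option \<Psi> (fW n i w)"
begin

lemma phiW_commute:
  assumes "w \<in> component n v" "i \<in> {1..n}"
  shows "phiW n i (\<Psi> w) = phiW n i w"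
  using assms(1)
proof (induction "phiW n i w" arbitrary: w)
  case 0
  then show ?case using fW_commute[OF _ assms(2)] fW_eq_None_iff by (metis option.map_disc_iff)
next
  case (Suc k)
  obtain w' where w': "fW n i w = Some w'" using Suc.hyps(2) fW_eq_None_iff by fastforce
  have w'C: "w' \<in> component n v" using component_fW[OF Suc.prems assms(2) w'] .
  have valid: "valid_word n w" using valid_word_component[OF valid_source Suc.prems] .
  have "phiW n i w' = k" using fW_Some[OF valid w' assms(2)] Suc.hyps(2) by simp
  then have "phiW n i (\<Psi> w') = k" using Suc.hyps(1) w'C by simp
  moreover have f: "fW n i (\<Psi> w) = Some (\<Psi> w')" using fW_commute[OF Suc.prems assms(2)] w' by simp
  moreover have "phiW n i (\<Psi> w) \<noteq> 0" using f fW_eq_None_iff[of n i "\<Psi> w"] by auto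
  ultimately show ?case
    using fW_Some[OF valid_image[OF Suc.prems] f assms(2)] Suc.hyps(2) by simp
qed

lemma epsW_commute:
  assumes "w \<in> component n v" "i \<in> {1..n}"
  shows "epsW n i (\<Psi> w) = epsW n i w"
  using phiW_minus_epsW[OF valid_image[OF assms(1)] assms(2)]
    phiW_minus_epsW[OF valid_word_component[OF valid_source assms(1)] assms(2)]
    phiW_commute[OF assms] wtW_image[OF assms(1)]
  by simp

lemma eW_commute:
  assumes w: "w \<in> component n v" and i: "i \<in> {1..n}"
  shows "eW n i (\<Psi> w) = map_option \<Psi> (eW n i w)"
proof (cases "eW n i w")
  case None
  then have "epsW n i (\<Psi> w) = 0" using epsW_commute[OF assms] eW_eq_None_iff by metis
  with None show ?thesis using eW_eq_None_iff[of n i "\<Psi> w"] by simp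
next
  case (Some w')
  have w'C: "w' \<in> component n v" using component_eW[OF w i Some] .
  have "fW n i w' = Some w"
    using eW_Some[OF valid_word_component[OF valid_source w] Some i] by simp
  then have "fW n i (\<Psi> w') = Some (\<Psi> w)" using fW_commute[OF w'C i] by simp
  then show ?thesis using fW_Some[OF valid_image[OF w'C] _ i] Some by simp
qed

lemma image_component: "\<Psi> ` component n v = component n (\<Psi> v)"
proof
  show "\<Psi> ` component n v \<subseteq> component n (\<Psi> v)"
  proof clarify
    fix w assume "w \<in> component n v"
    then show "\<Psi> w \<in> component n (\<Psi> v)"
    proof (induction rule: component_induct)
      case (edge y i z)
      then have "fW n i (\<Psi> y) = Some (\<Psi> z) \<or> eW n i (\<Psi> y) = Some (\<Psi> z)"
        using fW_commute[of y i] eW_commute[of y i] by auto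
      with edge show ?case using component_fW component_eW by blast
    qed (rule component_self)
  qed
  have "crystal_closed n (\<Psi> ` component n v)"
  proof (rule crystal_closedI)
    fix u i u' assume "u \<in> \<Psi> ` component n v" "i \<in> {1..n}" "fW n i u = Some u'"
    then obtain w where "w \<in> component n v" "map_option \<Psi> (fW n i w) = Some u'"
      using fW_commute by auto
    then show "u' \<in> \<Psi> ` component n v" using component_fW[of w n v i] \<open>i \<in> {1..n}\<close> by auto
  next
    fix u i u' assume "u \<in> \<Psi> ` component n v" "i \<in> {1..n}" "eW n i u = Some u'"
    then obtain w where "w \<in> component n v" "map_option \<Psi> (eW n i w) = Some u'"
      using eW_commute by auto
    then show "u' \<in> \<Psi> ` component n v" using component_eW[of w n v i] \<open>i \<in> {1..n}\<close> by auto
  qed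
  then show "component n (\<Psi> v) \<subseteq> \<Psi> ` component n v"
    using component_subset component_self by blast
qed

lemma highest_weight_image_iff:
  assumes "w \<in> component n v"
  shows "highest_weight n (\<Psi> w) \<longleftrightarrow> highest_weight n w"
  using assms eW_commute by (auto simp: highest_weight_def)

lemma fW_image_eq:
  assumes y: "y \<in> component n v" and i: "i \<in> {1..n}" and f: "fW n i y = Some z"
    and w: "w \<in> component n v" "\<Psi> z = \<Psi> w"
  shows "\<exists>u\<in>component n v. \<Psi> u = \<Psi> y \<and> fW n i u = Some w"
proof -
  have z: "z \<in> component n v" using component_fW[OF y i f] .
  have "eW n i (\<Psi> w) = Some (\<Psi> y)"
    using fW_Some[OF valid_word_component[OF valid_source y] f i] eW_commute[OF z i] w(2) by simp
  then obtain u where "eW n i w = Some u" "\<Psi> u = \<Psi> y" using eW_commute[OF w(1) i] by auto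
  then show ?thesis
    using eW_Some[OF valid_word_component[OF valid_source w(1)] _ i] component_eW[OF w(1) i] by auto
qed

lemma eW_image_eq:
  assumes y: "y \<in> component n v" and i: "i \<in> {1..n}" and e: "eW n i y = Some z"
    and w: "w \<in> component n v" "\<Psi> z = \<Psi> w"
  shows "\<exists>u\<in>component n v. \<Psi> u = \<Psi> y \<and> eW n i u = Some w"
proof -
  have z: "z \<in> component n v" using component_eW[OF y i e] .
  have "fW n i (\<Psi> w) = Some (\<Psi> y)"
    using eW_Some[OF valid_word_component[OF valid_source y] e i] fW_commute[OF z i] w(2) by simp
  then obtain u where "fW n i w = Some u" "\<Psi> u = \<Psi> y" using fW_commute[OF w(1) i] by auto
  then show ?thesis
    using fW_Some[OF valid_word_component[OF valid_source w(1)] _ i] component_fW[OF w(1) i] by auto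
qed

lemma inj_on_component:
  assumes hw: "highest_weight n v"
    and unique: "\<And>w. w \<in> component n v \<Longrightarrow> highest_weight n w \<Longrightarrow> w = v"
  shows "inj_on \<Psi> (component n v)"
proof -
  have "\<forall>w'\<in>component n v. \<Psi> w = \<Psi> w' \<longrightarrow> w = w'" if "w \<in> component n v" for w
    using that
  proof (induction rule: component_induct)
    case self
    show ?case
    proof (intro ballI impI)
      fix w' assume w': "w' \<in> component n v" "\<Psi> v = \<Psi> w'"
      then have "highest_weight n w'"
        using highest_weight_image_iff[OF component_self] highest_weight_image_iff[OF w'(1)] hw
        by simp
      then show "v = w'" using unique[OF w'(1)] by simp
    qed
  next
    case (edge y i z)
    show ?case
    proof (intro ballI impI)
      fix w' assume "w' \<in> component n v" "\<Psi> z = \<Psi> w'"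
      then show "z = w'"
        using edge fW_image_eq[OF edge(1,2) _ \<open>w' \<in> component n v\<close>]
          eW_image_eq[OF edge(1,2) _ \<open>w' \<in> component n v\<close>] by force
    qed
  qed
  then show ?thesis unfolding inj_on_def by blast
qed

theorem crystal_iso_component:
  assumes "highest_weight n v"
    and "\<And>w. w \<in> component n v \<Longrightarrow> highest_weight n w \<Longrightarrow> w = v"
  shows "crystal_iso n (component n v) (component n (\<Psi> v)) \<Psi>"
  unfolding crystal_iso_def bij_betw_def
  using inj_on_component[OF assms] image_component wtW_image fW_commute eW_commute by blast

end

section \<open>Words made of a spin column and a letter\<close>

lemma tri_iff:
  assumes "is_spin n C" "1 \<le> n"
  shows "tri n x C \<longleftrightarrow> (\<forall>t\<in>C. rank n t < rank n x)"
proof -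
  have "C \<noteq> {}" using spin_Pos_iff_Neg_notin[OF assms(1), of 1] assms(2) by auto
  then show ?thesis
    unfolding tri_def using spin_finite[OF assms(1)] by (auto simp: Max_ge_iff not_le)
qed

lemma Cn_spin: "is_spin n (Cn n)"
  by (auto simp: is_spin_def Cn_def)

lemma mem_Cn_iff [simp]: "Pos j \<in> Cn n \<longleftrightarrow> 1 \<le> j \<and> j \<le> n" "Neg j \<notin> Cn n" "Zero \<notin> Cn n"
  by (auto simp: Cn_def)

lemma spin_eq_Cn:
  assumes spin: "is_spin n C" and pos: "\<And>j. 1 \<le> j \<Longrightarrow> j \<le> n \<Longrightarrow> Pos j \<in> C"
  shows "C = Cn n"
proof (intro set_eqI iffI)
  fix t assume "t \<in> C"
  then show "t \<in> Cn n"
    using spin_valid_letter[OF spin] spin_Zero_notin[OF spin] spin_Pos_iff_Neg_notin[OF spin] pos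
    by (cases t) fastforce+
qed (auto simp: Cn_def pos)

lemma tri_Cn:
  assumes "1 \<le> n"
  shows "tri n Zero (Cn n)" "\<not> tri n (Pos 1) (Cn n)"
  unfolding tri_iff[OF Cn_spin assms] using assms by (auto simp: Cn_def intro: bexI[of _ "Pos 1"])

definition spin_letter_words :: "nat \<Rightarrow> word set" where
  "spin_letter_words n = {[S C, L x] | C x. is_spin n C \<and> valid_letter n x}"

definition tri_words :: "nat \<Rightarrow> word set" where
  "tri_words n = {[S C, L x] | C x. is_spin n C \<and> valid_letter n x \<and> tri n x C}"

lemma valid_word_spin_letter_words: "w \<in> spin_letter_words n \<Longrightarrow> valid_word n w"
  by (auto simp: spin_letter_words_def)

lemma tri_words_subset: "tri_words n \<subseteq> spin_letter_words n"
  by (auto simp: tri_words_def spin_letter_words_def)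

lemma crystal_closed_spin_letter_words: "crystal_closed n (spin_letter_words n)"
proof (rule crystal_closedI)
  fix w i w' assume "w \<in> spin_letter_words n" "i \<in> {1..n}" "fW n i w = Some w'"
  moreover from this have "valid_word n w'"
    using fW_Some[of n w i w'] by (auto simp: spin_letter_words_def)
  ultimately show "w' \<in> spin_letter_words n"
    by (auto simp: spin_letter_words_def fW_pair split: if_splits)
next
  fix w i w' assume "w \<in> spin_letter_words n" "i \<in> {1..n}" "eW n i w = Some w'"
  moreover from this have "valid_word n w'"
    using eW_Some[of n w i w'] by (auto simp: spin_letter_words_def)
  ultimately show "w' \<in> spin_letter_words n"
    by (auto simp: spin_letter_words_def eW_pair split: if_splits)
qed

lemma fW_preserves_letter_above:
  assumes spin: "is_spin n C" and x: "valid_letter n x" and above: "\<forall>t\<in>C. rank n t < rank n x"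
    and i: "i \<in> {1..n}" and f: "fW n i [S C, L x] = Some [S C', L x']"
  shows "\<forall>t\<in>C'. rank n t < rank n x'"
proof (cases "epsL n i x < phiS n i C")
  case acts_on_column: True
  then have x': "fS n i C = Some C'" "x' = x" using f unfolding fW_spin_letter
    by (auto split: if_splits)
  show ?thesis
  proof (cases "i = n")
    case True
    then have "Pos n \<in> C" "x \<noteq> Zero" "x \<noteq> Neg n" "C' = insert (Neg n) (C - {Pos n})"
      using acts_on_column x' i by (auto simp: ops_at_n split: if_splits)
    then show ?thesis using above x x' by (cases x) auto
  next
    case False
    then have "Neg (i + 1) \<in> C" "x \<noteq> Neg i"
      "C' = insert (Pos (i + 1)) (insert (Neg i) (C - {Pos i, Neg (i + 1)}))"
      using acts_on_column x' i by (auto simp: ops_below_n split: if_splits)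
    then show ?thesis using above x x' i by (cases x) auto
  qed
next
  case False
  then have "fL n i x = Some x'" "C' = C" using f unfolding fW_spin_letter
    by (auto split: if_splits)
  then show ?thesis using fL_rank above i by fastforce
qed

lemma eL_result_notin_column:
  assumes spin: "is_spin n C" and above: "\<forall>t\<in>C. rank n t < rank n x"
    and i: "i \<in> {1..n}" and acts_on_letter: "phiS n i C < epsL n i x" and e: "eL n i x = Some x'"
  shows "x' \<notin> C"
proof (cases "i = n")
  case True
  then show ?thesis
    using acts_on_letter e i spin_Zero_notin[OF spin] by (auto simp: ops_at_n split: if_splits)
next
  case False
  then have i': "1 \<le> i" "i < n" using i by auto
  then consider "x = Pos (i + 1)" "x' = Pos i" | "x = Neg i" "x' = Neg (i + 1)"
    using e by (auto simp: ops_below_n split: if_splits)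
  then show ?thesis
  proof cases
    case 1
    then show ?thesis using above spin_Pos_iff_Neg_notin[OF spin, of "i + 1"] i' by force
  next
    case 2
    then have "Pos i \<in> C" using above spin_Pos_iff_Neg_notin[OF spin, of i] i' by force
    then show ?thesis using acts_on_letter 2 i' by (simp add: ops_below_n split: if_splits)
  qed
qed

lemma eW_preserves_letter_above:
  assumes spin: "is_spin n C" and x: "valid_letter n x" and above: "\<forall>t\<in>C. rank n t < rank n x"
    and i: "i \<in> {1..n}" and e: "eW n i [S C, L x] = Some [S C', L x']"
  shows "\<forall>t\<in>C'. rank n t < rank n x'"
proof (cases "phiS n i C < epsL n i x")
  case True
  then have x': "eL n i x = Some x'" "C' = C" using e unfolding eW_spin_letter
    by (auto split: if_splits)
  have "x' \<notin> C" using eL_result_notin_column[OF spin above i True x'(1)] .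
  show ?thesis
  proof
    fix t assume t: "t \<in> C'"
    then have "rank n t \<noteq> rank n x'"
      using \<open>x' \<notin> C\<close> x'(2) spin_valid_letter[OF spin] rank_eq_iff eL_Some[OF x x'(1) i] by auto
    moreover have "rank n t < rank n x' + 1" using above t x'(2) eL_rank[OF x'(1) i] by auto
    ultimately show "rank n t < rank n x'" by simp
  qed
next
  case False
  then have C': "eS n i C = Some C'" "x' = x" using e unfolding eW_spin_letter
    by (auto split: if_splits)
  have "\<exists>s\<in>C. rank n t \<le> rank n s" if "t \<in> C'" for t
  proof (cases "i = n")
    case True
    then show ?thesis using C' i that
      by (auto simp: ops_at_n split: if_splits intro: bexI[of _ "Neg n"])
  next
    case False
    then show ?thesis using C' i that
      by (auto simp: ops_below_n split: if_splits intro: bexI[of _ "Neg i"])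
  qed
  then show ?thesis using above C'(2) by fastforce
qed

lemma crystal_closed_tri_words:
  assumes n: "1 \<le> n"
  shows "crystal_closed n (tri_words n)"
proof -
  have "w' \<in> tri_words n"
    if w: "w \<in> tri_words n" and i: "i \<in> {1..n}" and step: "fW n i w = Some w' \<or> eW n i w = Some w'"
    for w i w'
  proof -
    obtain C x where w_def: "w = [S C, L x]" and C: "is_spin n C" "valid_letter n x" "tri n x C"
      using w by (auto simp: tri_words_def)
    have "w' \<in> spin_letter_words n"
      using step crystal_closed_fW crystal_closed_eW crystal_closed_spin_letter_words w i
        tri_words_subset by blast
    then obtain C' x' where w'_def: "w' = [S C', L x']" and C': "is_spin n C'" "valid_letter n x'"
      by (auto simp: spin_letter_words_def)
    have "\<forall>t\<in>C'. rank n t < rank n x'"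
      using step fW_preserves_letter_above[OF C(1,2) _ i] eW_preserves_letter_above[OF C(1,2) _ i]
        tri_iff[OF C(1) n] C(3) unfolding w_def w'_def by blast
    then show ?thesis using C' tri_iff[OF C'(1) n] by (auto simp: tri_words_def w'_def)
  qed
  then show ?thesis by (blast intro: crystal_closedI)
qed

(* Edges can be reversed, so this needs no analysis of f_i on the words with x not above C. *)
lemma crystal_closed_non_tri_words:
  assumes "1 \<le> n"
  shows "crystal_closed n (spin_letter_words n - tri_words n)"
  using crystal_closed_Diff crystal_closed_spin_letter_words crystal_closed_tri_words[OF assms]
    valid_word_spin_letter_words by blast

lemma highest_weight_spin_letter_iff:
  assumes n: "1 \<le> n" and spin: "is_spin n C" and x: "valid_letter n x"
  shows "highest_weight n [S C, L x] \<longleftrightarrow> C = Cn n \<and> (x = Zero \<or> x = Pos 1)"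
proof
  assume hw: "highest_weight n [S C, L x]"
  have E: "epsS n i C = 0 \<and> epsL n i x \<le> phiS n i C" if "1 \<le> i" "i \<le> n" for i
    using hw that eW_eq_None_iff[of n i "[S C, L x]"] by (auto simp: highest_weight_def)
  have "Pos j \<in> C" if j: "1 \<le> j" "j \<le> n" for j
    using j(2)
  proof (induction j rule: inc_induct)
    case base
    then show ?case using E[of n] n spin_Pos_iff_Neg_notin[OF spin, of n]
      by (simp add: ops_at_n split: if_splits)
  next
    case (step m)
    then show ?case
      using E[of m] j(1) spin_Pos_iff_Neg_notin[OF spin, of m]
      by (simp add: ops_below_n split: if_splits)
  qed
  then have C: "C = Cn n" by (rule spin_eq_Cn[OF spin])
  have "x = Zero \<or> x = Pos 1"
  proof (cases x)
    case (Pos j)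
    show ?thesis
    proof (rule ccontr)
      assume "\<not> ?thesis"
      then obtain k where "j = Suc k" "1 \<le> k" "k < n" using Pos x by (cases j) auto
      then show False using E[of k] Pos C by (auto simp: ops_below_n)
    qed
  next
    case (Neg j)
    then show ?thesis
      using E[of j] x C n by (cases "j = n") (auto simp: ops_at_n ops_below_n)
  qed simp
  with C show "C = Cn n \<and> (x = Zero \<or> x = Pos 1)" by simp
next
  assume "C = Cn n \<and> (x = Zero \<or> x = Pos 1)"
  then show "highest_weight n [S C, L x]"
    by (auto simp: highest_weight_def eW_pair epsL_def phiS_def eS_def eL_def)
qed

lemma highest_weight_in_tri_words:
  assumes n: "1 \<le> n" and "w \<in> tri_words n" "highest_weight n w"
  shows "w = [S (Cn n), L Zero]"
  using assms highest_weight_spin_letter_iff[OF n] tri_Cn[OF n] by (auto simp: tri_words_def)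

lemma highest_weight_in_non_tri_words:
  assumes n: "1 \<le> n" and "w \<in> spin_letter_words n - tri_words n" "highest_weight n w"
  shows "w = [S (Cn n), L (Pos 1)]"
  using assms highest_weight_spin_letter_iff[OF n] tri_Cn[OF n]
  by (auto simp: tri_words_def spin_letter_words_def)

lemma component_tri_words:
  assumes n: "1 \<le> n"
  shows "component n [S (Cn n), L Zero] = tri_words n"
proof
  have "[S (Cn n), L Zero] \<in> tri_words n"
    using Cn_spin tri_Cn[OF n] by (auto simp: tri_words_def)
  then show "component n [S (Cn n), L Zero] \<subseteq> tri_words n"
    using component_subset crystal_closed_tri_words[OF n] by blast
  show "tri_words n \<subseteq> component n [S (Cn n), L Zero]"
  proof
    fix w assume "w \<in> tri_words n"
    then obtain u where "u \<in> tri_words n" "highest_weight n u" "w \<in> component n u"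
      using highest_weight_reachable[OF crystal_closed_tri_words[OF n]]
        valid_word_spin_letter_words tri_words_subset by blast
    then show "w \<in> component n [S (Cn n), L Zero]"
      using highest_weight_in_tri_words[OF n] by blast
  qed
qed

lemma component_non_tri_words:
  assumes n: "1 \<le> n"
  shows "component n [S (Cn n), L (Pos 1)] = spin_letter_words n - tri_words n"
proof
  have "[S (Cn n), L (Pos 1)] \<in> spin_letter_words n - tri_words n"
    using Cn_spin tri_Cn[OF n] n by (auto simp: tri_words_def spin_letter_words_def)
  then show "component n [S (Cn n), L (Pos 1)] \<subseteq> spin_letter_words n - tri_words n"
    using component_subset crystal_closed_non_tri_words[OF n] by blast
  show "spin_letter_words n - tri_words n \<subseteq> component n [S (Cn n), L (Pos 1)]"
  proof
    fix w assume "w \<in> spin_letter_words n - tri_words n"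
    then obtain u where "u \<in> spin_letter_words n - tri_words n" "highest_weight n u"
        "w \<in> component n u"
      using highest_weight_reachable[OF crystal_closed_non_tri_words[OF n]]
        valid_word_spin_letter_words by blast
    then show "w \<in> component n [S (Cn n), L (Pos 1)]"
      using highest_weight_in_non_tri_words[OF n] by blast
  qed
qed

section \<open>The component of Cn n followed by 0\<close>

definition is_spin_weight :: "nat \<Rightarrow> (nat \<Rightarrow> real) \<Rightarrow> bool" where
  "is_spin_weight n W \<longleftrightarrow> (\<forall>j\<in>{1..n}. W j = 1/2 \<or> W j = -1/2) \<and> (\<forall>j. j \<notin> {1..n} \<longrightarrow> W j = 0)"

definition spin_of_weight :: "nat \<Rightarrow> (nat \<Rightarrow> real) \<Rightarrow> letter set" where
  "spin_of_weight n W = {Pos j | j. j \<in> {1..n} \<and> W j > 0} \<union> {Neg j | j. j \<in> {1..n} \<and> W j < 0}"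

lemma is_spin_weight_wtS:
  assumes spin: "is_spin n C"
  shows "is_spin_weight n (wtS C)"
proof -
  have "wtS C j = 1/2 \<or> wtS C j = -1/2" if "j \<in> {1..n}" for j
    using that spin_Pos_iff_Neg_notin[OF spin, of j] by (auto simp: wtS_def)
  moreover have "wtS C j = 0" if "j \<notin> {1..n}" for j
  proof -
    have "Pos j \<notin> C" "Neg j \<notin> C" using that spin_valid_letter[OF spin] by fastforce+
    then show ?thesis by (simp add: wtS_def)
  qed
  ultimately show ?thesis by (simp add: is_spin_weight_def)
qed

lemma
  assumes "is_spin_weight n W"
  shows is_spin_spin_of_weight: "is_spin n (spin_of_weight n W)"
    and wtS_spin_of_weight: "wtS (spin_of_weight n W) = W"
proof -
  have W: "W j = 1/2 \<or> W j = -1/2" if "j \<in> {1..n}" for j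
    using assms that by (simp add: is_spin_weight_def)
  show "is_spin n (spin_of_weight n W)"
    unfolding is_spin_def spin_of_weight_def using W by fastforce
  have "W j = 0" if "j \<notin> {1..n}" for j
    using assms that by (simp add: is_spin_weight_def)
  with W show "wtS (spin_of_weight n W) = W"
    unfolding wtS_def spin_of_weight_def fun_eq_iff by fastforce
qed

lemma spin_of_weight_wtS:
  assumes spin: "is_spin n C"
  shows "spin_of_weight n (wtS C) = C"
proof (intro set_eqI)
  fix t
  show "t \<in> spin_of_weight n (wtS C) \<longleftrightarrow> t \<in> C"
  proof (cases t)
    case (Pos j)
    then show ?thesis using spin_valid_letter[OF spin, of t]
      by (auto simp: spin_of_weight_def wtS_def)
  next
    case Zero
    then show ?thesis using spin_Zero_notin[OF spin] by (simp add: spin_of_weight_def)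
  next
    case (Neg j)
    then show ?thesis
      using spin_valid_letter[OF spin, of t] spin_Pos_iff_Neg_notin[OF spin, of j]
      by (auto simp: spin_of_weight_def wtS_def)
  qed
qed

lemma spin_eq_iff_wtS_eq: "is_spin n C\<^sub>1 \<Longrightarrow> is_spin n C\<^sub>2 \<Longrightarrow> C\<^sub>1 = C\<^sub>2 \<longleftrightarrow> wtS C\<^sub>1 = wtS C\<^sub>2"
  by (metis spin_of_weight_wtS)

lemma phiW_or_epsW_eq_0:
  assumes closed: "crystal_closed n X"
    and spin_weights: "\<And>w. w \<in> X \<Longrightarrow> valid_word n w \<and> is_spin_weight n (wtW w)"
    and w: "w \<in> X" and i: "i \<in> {1..n}"
  shows "phiW n i w = 0 \<or> epsW n i w = 0"
proof (rule ccontr)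
  assume "\<not> ?thesis"
  then obtain w\<^sub>f w\<^sub>e where f: "fW n i w = Some w\<^sub>f" and e: "eW n i w = Some w\<^sub>e"
    using fW_eq_None_iff[of n i w] eW_eq_None_iff[of n i w] by auto
  have "wtW w\<^sub>f i = wtW w i - 1" "wtW w\<^sub>e i = wtW w i + 1"
    using fW_Some[OF _ f i] eW_Some[OF _ e i] spin_weights[OF w] by (auto simp: simple_root_def)
  moreover have "is_spin_weight n (wtW w\<^sub>f)" "is_spin_weight n (wtW w\<^sub>e)"
    using spin_weights crystal_closed_fW[OF closed w i f] crystal_closed_eW[OF closed w i e] by auto
  then have "wtW w\<^sub>f i = 1/2 \<or> wtW w\<^sub>f i = -1/2" "wtW w\<^sub>e i = 1/2 \<or> wtW w\<^sub>e i = -1/2"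
    using i by (simp_all add: is_spin_weight_def)
  ultimately show False by auto
qed

lemma phiW_pos_iff_coroot_pairing:
  assumes "phiW n i w = 0 \<or> epsW n i w = 0" "valid_word n w" "i \<in> {1..n}"
  shows "0 < phiW n i w \<longleftrightarrow> 0 < coroot_pairing n i (wtW w)"
  using phiW_minus_epsW[OF assms(2,3)] assms(1) by auto

definition spin_words :: "nat \<Rightarrow> word set" where
  "spin_words n = {[S C] | C. is_spin n C}"

lemma crystal_closed_spin_words: "crystal_closed n (spin_words n)"
proof (rule crystal_closedI)
  fix w i w' assume "w \<in> spin_words n" "i \<in> {1..n}" "fW n i w = Some w'"
  then show "w' \<in> spin_words n"
    using fW_Some[of n w i w'] by (auto simp: spin_words_def fW_eq_None_iff split: if_splits)
next
  fix w i w' assume "w \<in> spin_words n" "i \<in> {1..n}" "eW n i w = Some w'"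
  then show "w' \<in> spin_words n"
    using eW_Some[of n w i w'] by (auto simp: spin_words_def)
qed

lemma spin_words_spin_weight: "w \<in> spin_words n \<Longrightarrow> valid_word n w \<and> is_spin_weight n (wtW w)"
  by (auto simp: spin_words_def is_spin_weight_wtS)

lemma tri_words_spin_weight:
  assumes n: "1 \<le> n" and w: "w \<in> tri_words n"
  shows "valid_word n w \<and> is_spin_weight n (wtW w)"
proof -
  obtain C x where w_def: "w = [S C, L x]" and spin: "is_spin n C" and x: "valid_letter n x"
    and above: "\<forall>t\<in>C. rank n t < rank n x"
    using w tri_iff[OF _ n] by (auto simp: tri_words_def)
  have "is_spin_weight n (\<lambda>j. wtS C j + wtL x j)"
  proof (cases x)
    case (Pos j)
    then show ?thesis using above x spin_Pos_iff_Neg_notin[OF spin, of j] by force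
  next
    case Zero
    then show ?thesis using is_spin_weight_wtS[OF spin] by simp
  next
    case (Neg j)
    then have "Pos j \<in> C" using above x spin_Pos_iff_Neg_notin[OF spin, of j] by force
    then have "(\<lambda>j'. wtS C j' + wtL x j') = (wtS C)(j := -1/2)"
      using Neg by (auto simp: wtS_def fun_eq_iff)
    moreover have "is_spin_weight n ((wtS C)(j := -1/2))"
      using is_spin_weight_wtS[OF spin] Neg x by (auto simp: is_spin_weight_def)
    ultimately show ?thesis by simp
  qed
  then show ?thesis using w_def spin x by simp
qed

definition psi_tri :: "nat \<Rightarrow> word \<Rightarrow> word" where
  "psi_tri n w = [S (spin_of_weight n (wtW w))]"

lemma fW_psi_tri:
  assumes n: "1 \<le> n" and w: "w \<in> tri_words n" and i: "i \<in> {1..n}"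
  shows "fW n i (psi_tri n w) = map_option (psi_tri n) (fW n i w)"
proof -
  have spin_weight: "valid_word n w" "is_spin_weight n (wtW w)"
    using tri_words_spin_weight[OF n w] by auto
  have image: "psi_tri n w \<in> spin_words n" "wtW (psi_tri n w) = wtW w"
    using is_spin_spin_of_weight[OF spin_weight(2)] wtS_spin_of_weight[OF spin_weight(2)]
    by (auto simp: psi_tri_def spin_words_def)
  have "0 < phiW n i (psi_tri n w) \<longleftrightarrow> 0 < phiW n i w"
    using phiW_pos_iff_coroot_pairing[OF phiW_or_epsW_eq_0[OF crystal_closed_spin_words
          spin_words_spin_weight image(1) i] _ i]
      phiW_pos_iff_coroot_pairing[OF phiW_or_epsW_eq_0[OF crystal_closed_tri_words[OF n]
          tri_words_spin_weight[OF n] w i] spin_weight(1) i]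
      spin_words_spin_weight[OF image(1)] image(2) by simp
  then have None_iff: "fW n i (psi_tri n w) = None \<longleftrightarrow> fW n i w = None"
    unfolding fW_eq_None_iff by (metis neq0_conv)
  show ?thesis
  proof (cases "fW n i w")
    case None
    then show ?thesis using None_iff by simp
  next
    case (Some w')
    then obtain u where u: "fW n i (psi_tri n w) = Some u" using None_iff by auto
    then obtain C where C: "u = [S C]" "is_spin n C"
      using crystal_closed_fW[OF crystal_closed_spin_words image(1) i]
      by (auto simp: spin_words_def)
    have "wtW w' = wtW u"
      using fW_Some[OF spin_weight(1) Some i] fW_Some[OF _ u i] image spin_words_spin_weight by simp
    then have "psi_tri n w' = u" using C spin_of_weight_wtS by (simp add: psi_tri_def)
    then show ?thesis using Some u by simp
  qed
qed

theorem crystal_iso_psi_tri: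
  assumes n: "1 \<le> n"
  shows "crystal_iso n (component n [S (Cn n), L Zero]) (component n [S (Cn n)]) (psi_tri n)"
proof -
  note component = component_tri_words[OF n]
  interpret fW_equivariant n "[S (Cn n), L Zero]" "psi_tri n"
  proof
    fix w assume "w \<in> component n [S (Cn n), L Zero]"
    then have w: "w \<in> tri_words n" using component by simp
    show "valid_word n (psi_tri n w)" "wtW (psi_tri n w) = wtW w"
      using is_spin_spin_of_weight wtS_spin_of_weight tri_words_spin_weight[OF n w]
      by (auto simp: psi_tri_def)
    show "fW n i (psi_tri n w) = map_option (psi_tri n) (fW n i w)" if "i \<in> {1..n}" for i
      using fW_psi_tri[OF n w that] .
  qed (simp add: Cn_spin)
  have image: "psi_tri n [S (Cn n), L Zero] = [S (Cn n)]"
    using spin_of_weight_wtS[OF Cn_spin] by (simp add: psi_tri_def)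
  have "crystal_iso n (component n [S (Cn n), L Zero])
      (component n (psi_tri n [S (Cn n), L Zero])) (psi_tri n)"
  proof (rule crystal_iso_component)
    show "highest_weight n [S (Cn n), L Zero]"
      using highest_weight_spin_letter_iff[OF n Cn_spin] by simp
    show "w = [S (Cn n), L Zero]" if "w \<in> component n [S (Cn n), L Zero]" "highest_weight n w" for w
      using highest_weight_in_tri_words[OF n] that component by simp
  qed
  then show ?thesis unfolding image .
qed

lemma crystal_iso_tri_image:
  assumes n: "1 \<le> n"
    and iso: "crystal_iso n (component n [S (Cn n), L Zero]) (component n [S (Cn n)]) \<Psi>"
    and C: "is_spin n C" "valid_letter n x" "tri n x C"
  shows "\<exists>C'. is_spin n C' \<and> (\<forall>j. wtS C' j = wtS C j + wtL x j) \<and> \<Psi> [S C, L x] = [S C']"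
proof -
  have w: "[S C, L x] \<in> component n [S (Cn n), L Zero]"
    using C component_tri_words[OF n] by (auto simp: tri_words_def)
  then have "\<Psi> [S C, L x] \<in> component n [S (Cn n)]"
    using iso by (auto simp: crystal_iso_def bij_betw_def)
  moreover have "component n [S (Cn n)] \<subseteq> spin_words n"
    using component_subset[OF _ crystal_closed_spin_words] Cn_spin by (simp add: spin_words_def)
  ultimately have "\<Psi> [S C, L x] \<in> spin_words n" by blast
  moreover have "wtW (\<Psi> [S C, L x]) = wtW [S C, L x]"
    using iso w by (simp add: crystal_iso_def)
  ultimately show ?thesis by (auto simp: spin_words_def fun_eq_iff)
qed

section \<open>The component of Cn n followed by 1\<close>

(* In the notation of the theorem, upper_set n C x is T, least_upper n C x is x', and
   column_exchange C x x' is C' (the letter 0 never enters a column). *)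
definition upper_set :: "nat \<Rightarrow> letter set \<Rightarrow> letter \<Rightarrow> letter set" where
  "upper_set n C x = (if rank n Zero \<le> rank n x then {t \<in> C. rank n x \<le> rank n t}
                      else {t \<in> C. rank n x \<le> rank n t} \<union> {Zero})"

definition least_upper :: "nat \<Rightarrow> letter set \<Rightarrow> letter \<Rightarrow> letter" where
  "least_upper n C x = (THE t. t \<in> upper_set n C x \<and> (\<forall>s\<in>upper_set n C x. rank n t \<le> rank n s))"

fun bar :: "letter \<Rightarrow> letter" where
  "bar (Pos j) = Neg j"
| "bar Zero = Zero"
| "bar (Neg j) = Pos j"

definition column_exchange :: "letter set \<Rightarrow> letter \<Rightarrow> letter \<Rightarrow> letter set" where
  "column_exchange C x y = (if y = x then C else C - {bar x, y} \<union> ({x, bar y} - {Zero}))"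

lemma mem_upper_set_iff:
  "s \<in> upper_set n C x \<longleftrightarrow> s \<in> C \<and> rank n x \<le> rank n s \<or> s = Zero \<and> rank n x \<le> n"
  by (auto simp: upper_set_def)

lemma least_upper_eqI:
  assumes spin: "is_spin n C" and z: "z \<in> upper_set n C x"
    and least: "\<forall>s\<in>upper_set n C x. rank n z \<le> rank n s"
  shows "least_upper n C x = z"
  unfolding least_upper_def
proof (rule the_equality)
  have valid: "valid_letter n s" if "s \<in> upper_set n C x" for s
    using that spin_valid_letter[OF spin] by (auto simp: mem_upper_set_iff)
  fix t assume "t \<in> upper_set n C x \<and> (\<forall>s\<in>upper_set n C x. rank n t \<le> rank n s)"
  then show "t = z" using z least valid rank_eq_iff by (meson le_antisym)
qed (use z least in simp)

lemma
  assumes spin: "is_spin n C" and below: "\<exists>t\<in>C. rank n x \<le> rank n t"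
  shows least_upper_mem: "least_upper n C x \<in> upper_set n C x"
    and least_upper_le: "\<forall>s\<in>upper_set n C x. rank n (least_upper n C x) \<le> rank n s"
proof -
  have "finite (rank n ` upper_set n C x)" "rank n ` upper_set n C x \<noteq> {}"
    using spin_finite[OF spin] below by (auto simp: upper_set_def)
  then obtain z where "z \<in> upper_set n C x" "rank n z = Min (rank n ` upper_set n C x)"
    by (metis (no_types, lifting) Min_in imageE)
  moreover from this have "\<forall>s\<in>upper_set n C x. rank n z \<le> rank n s"
    using \<open>finite (rank n ` upper_set n C x)\<close> by simp
  ultimately show "least_upper n C x \<in> upper_set n C x"
    "\<forall>s\<in>upper_set n C x. rank n (least_upper n C x) \<le> rank n s"
    using least_upper_eqI[OF spin] by auto
qed

lemma least_upper_self:
  assumes "is_spin n C" "x \<in> C"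
  shows "least_upper n C x = x"
  using assms by (intro least_upper_eqI) (auto simp: mem_upper_set_iff)

lemma spin_rank_ne_Zero: "is_spin n C \<Longrightarrow> s \<in> C \<Longrightarrow> rank n s \<noteq> rank n Zero"
  using spin_valid_letter spin_Zero_notin by (cases s) fastforce+

lemma bar_eq_iff [simp]:
  "bar x = Pos j \<longleftrightarrow> x = Neg j" "bar x = Neg j \<longleftrightarrow> x = Pos j" "bar x = Zero \<longleftrightarrow> x = Zero"
  "Pos j = bar x \<longleftrightarrow> x = Neg j" "Neg j = bar x \<longleftrightarrow> x = Pos j" "Zero = bar x \<longleftrightarrow> x = Zero"
  by (cases x; auto)+

fun psi_non_tri :: "nat \<Rightarrow> word \<Rightarrow> word" where
  "psi_non_tri n [S C, L x] = [L (least_upper n C x), S (column_exchange C x (least_upper n C x))]"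
| "psi_non_tri n w = w"

locale non_tri_letter =
  fixes n :: nat and C :: "letter set" and x :: letter
  assumes spin: "is_spin n C" and valid_x: "valid_letter n x"
    and below: "\<exists>t\<in>C. rank n x \<le> rank n t"
begin

abbreviation y :: letter where "y \<equiv> least_upper n C x"

abbreviation D :: "letter set" where "D \<equiv> column_exchange C x y"

lemma y_mem: "y \<in> C \<or> y = Zero \<and> rank n x \<le> n"
  and rank_x_le_y: "rank n x \<le> rank n y"
  and y_least: "\<And>s. s \<in> C \<Longrightarrow> rank n x \<le> rank n s \<Longrightarrow> rank n y \<le> rank n s"
  using least_upper_mem[OF spin below] least_upper_le[OF spin below]
  by (auto simp: mem_upper_set_iff)

lemma valid_y: "valid_letter n y"
  using y_mem spin_valid_letter[OF spin] by auto

lemma y_less: "s \<in> C \<Longrightarrow> rank n x \<le> rank n s \<Longrightarrow> s \<noteq> y \<Longrightarrow> rank n y < rank n s"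
  using y_least rank_eq_iff[OF valid_y spin_valid_letter[OF spin]] by fastforce

lemma y_le_Zero: "rank n x \<le> n \<Longrightarrow> rank n y \<le> n + 1"
  using least_upper_le[OF spin below, THEN bspec, of Zero] by (simp add: mem_upper_set_iff)

lemma y_eq_x: "x \<in> C \<Longrightarrow> y = x"
  using least_upper_self[OF spin] by simp

lemma y_neq_x: "x \<notin> C \<Longrightarrow> y \<noteq> x"
  using y_mem by auto

lemma D_eq_C: "x \<in> C \<Longrightarrow> D = C"
  using y_eq_x by (simp add: column_exchange_def)

lemma least_upper_eq_y:
  assumes "\<forall>s\<in>C. rank n x' \<le> rank n s \<longrightarrow> rank n x \<le> rank n s"
    and "rank n x \<le> rank n x'" "rank n x' \<le> rank n y" "y = Zero \<Longrightarrow> rank n x' \<le> n"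
  shows "least_upper n C x' = y"
  using assms y_mem y_least y_le_Zero
  by (intro least_upper_eqI[OF spin]) (auto simp: mem_upper_set_iff)

lemma y_not_bar_x: "y \<noteq> bar x"
  using valid_x valid_y rank_x_le_y y_le_Zero y_mem spin_Zero_notin[OF spin]
  by (cases x; cases y) auto

lemma D_spin_weight: "is_spin n D \<and> wtS D = (\<lambda>j. wtS C j + wtL x j - wtL y j)"
proof (cases "x \<in> C")
  case True
  then show ?thesis using spin y_eq_x by (simp add: column_exchange_def fun_eq_iff)
next
  case x_notin: False
  have D: "D = C - {bar x, y} \<union> ({x, bar y} - {Zero})"
    using y_neq_x[OF x_notin] by (simp add: column_exchange_def)
  have y: "y \<in> C \<or> y = Zero" "valid_letter n y" using y_mem valid_y by auto
  note PN = spin_Pos_iff_Neg_notin[OF spin]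
  have "is_spin n D"
    unfolding is_spin_def
  proof
    show "\<forall>t\<in>D. t \<noteq> Zero \<and> valid_letter n t"
      unfolding D using spin_valid_letter[OF spin] spin_Zero_notin[OF spin] valid_x y(2)
      by (cases y) auto
    show "\<forall>j\<in>{1..n}. (Pos j \<in> D) \<noteq> (Neg j \<in> D)"
      unfolding D using PN x_notin y y_neq_x[OF x_notin] y_not_bar_x valid_x
      by (cases x; cases y) auto
  qed
  moreover have "wtS D j = wtS C j + wtL x j - wtL y j" for j
  proof (cases "j \<in> {1..n}")
    case True
    then show ?thesis
      unfolding D wtS_def using PN[of j] x_notin y y_neq_x[OF x_notin] y_not_bar_x valid_x
      by (cases x; cases y) auto
  next
    case False
    then have "Pos j \<notin> C" "Neg j \<notin> C" using spin_valid_letter[OF spin] by fastforce+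
    then show ?thesis
      unfolding D wtS_def using False x_notin y y_neq_x[OF x_notin] valid_x
      by (cases x; cases y) auto
  qed
  ultimately show ?thesis by auto
qed

lemma D_subset: "m \<in> D \<Longrightarrow> m \<in> C \<or> m = x \<or> m = bar y"
  by (auto simp: column_exchange_def split: if_splits)

lemma D_keep: "m \<in> C \<Longrightarrow> m \<noteq> bar x \<Longrightarrow> m \<noteq> y \<Longrightarrow> m \<in> D"
  by (auto simp: column_exchange_def)

lemma x_mem_D: "x \<noteq> Zero \<Longrightarrow> x \<in> D"
  using y_mem by (auto simp: column_exchange_def)

lemma bar_y_mem_D: "y \<noteq> x \<Longrightarrow> y \<noteq> Zero \<Longrightarrow> bar y \<in> D"
  by (cases y) (auto simp: column_exchange_def)

lemma D_excludes: "m \<in> D \<Longrightarrow> y \<noteq> x \<Longrightarrow> m \<noteq> y \<and> m \<noteq> bar x"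
  using valid_x by (cases x; cases y) (auto simp: column_exchange_def)

lemma least_upper_fS_below_n:
  assumes i: "1 \<le> i" "i < n" and column: "Pos i \<in> C" "Neg (i + 1) \<in> C"
    and x: "x \<noteq> Pos (i + 1)" "x \<noteq> Neg i"
  shows "least_upper n (insert (Pos (i + 1)) (insert (Neg i) (C - {Pos i, Neg (i + 1)}))) x =
           (if y = Pos i then Pos (i + 1) else if y = Neg (i + 1) then Neg i else y)"
    (is "least_upper n ?C\<^sub>1 x = ?z")
proof (rule least_upper_eqI)
  have "fS n i C = Some ?C\<^sub>1" using column i by (simp add: ops_below_n)
  then show "is_spin n ?C\<^sub>1" using fS_spin[OF spin] by blast
  have x_rank: "rank n x \<noteq> i + 1" "rank n x \<noteq> 2 * n + 2 - i"
    using x valid_x i by (cases x; auto)+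
  have z_rank: "rank n ?z \<le> rank n y + 1" "?z \<noteq> y \<Longrightarrow> y = Pos i \<or> y = Neg (i + 1)"
    using i by (auto split: if_splits)
  have "y \<in> C \<or> y = Zero" using y_mem by auto
  then show "?z \<in> upper_set n ?C\<^sub>1 x"
    unfolding mem_upper_set_iff using y_mem rank_x_le_y x i valid_x valid_y
    by (cases y; cases x) auto
  show "\<forall>s\<in>upper_set n ?C\<^sub>1 x. rank n ?z \<le> rank n s"
  proof
    fix s assume "s \<in> upper_set n ?C\<^sub>1 x"
    then consider "s = Pos (i + 1)" "rank n x \<le> i + 1" | "s = Neg i" "rank n x \<le> 2 * n + 2 - i"
      | "s \<in> C" "s \<noteq> Pos i" "s \<noteq> Neg (i + 1)" "rank n x \<le> rank n s"
      | "s = Zero" "rank n x \<le> n"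
      by (auto simp: mem_upper_set_iff)
    then show "rank n ?z \<le> rank n s"
    proof cases
      case 1
      then have "rank n y \<le> i" using y_least[of "Pos i"] column x_rank by simp
      then show ?thesis using 1 i z_rank by auto
    next
      case 2
      then have "rank n y \<le> 2 * n + 1 - i" using y_least[of "Neg (i + 1)"] column x_rank i by simp
      then show ?thesis using 2 i z_rank by auto
    next
      case 3
      then show ?thesis using y_least[OF 3(1,4)] y_less[OF 3(1,4)] z_rank by fastforce
    next
      case 4
      then have "rank n y \<le> n + 1" using y_le_Zero by simp
      moreover from this have "y \<noteq> Neg (i + 1)" using i by auto
      ultimately show ?thesis using 4(1) i by auto
    qed
  qed
qed

lemma fW_psi_fS_below_n:
  assumes i: "1 \<le> i" "i < n" and column: "Pos i \<in> C" "Neg (i + 1) \<in> C"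
    and x: "x \<noteq> Pos (i + 1)" "x \<noteq> Neg i"
  shows "\<exists>D'. fW n i [L y, S D] = Some
    [L (least_upper n (insert (Pos (i + 1)) (insert (Neg i) (C - {Pos i, Neg (i + 1)}))) x), S D']"
proof (cases "y = Pos i \<or> y = Neg (i + 1)")
  case True
  have "Neg i \<notin> C" "Pos (i + 1) \<notin> C"
    using column spin_Pos_iff_Neg_notin[OF spin, of i] spin_Pos_iff_Neg_notin[OF spin, of "i + 1"] i
    by auto
  then have "\<not> (Pos (i + 1) \<in> D \<and> Neg i \<in> D)"
    using D_subset[of "Pos (i + 1)"] D_subset[of "Neg i"] x True by auto
  with True show ?thesis
    using least_upper_fS_below_n[OF assms] i by (auto simp: fW_letter_spin ops_below_n)
next
  case False
  then have "Pos i \<in> D \<and> Neg (i + 1) \<in> D" using column x by (auto intro!: D_keep)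
  with False show ?thesis
    using least_upper_fS_below_n[OF assms] i by (auto simp: fW_letter_spin ops_below_n)
qed

lemma fW_psi_None_below_n:
  assumes i: "1 \<le> i" "i < n" and column: "Pos i \<in> C" "Neg (i + 1) \<in> C"
    and x: "x = Pos (i + 1) \<or> x = Neg i"
  shows "fW n i [L y, S D] = None"
proof -
  have "x \<notin> C"
    using x column spin_Pos_iff_Neg_notin[OF spin, of i]
      spin_Pos_iff_Neg_notin[OF spin, of "i + 1"] i
    by auto
  then have "\<not> (Pos i \<in> D \<and> Neg (i + 1) \<in> D)"
    using D_excludes[of "Pos i"] D_excludes[of "Neg (i + 1)"] y_neq_x x by auto
  moreover have "phiL n i y = 0"
    using x rank_x_le_y y_le_Zero i valid_y unfolding ops_below_n[OF i] by (cases y) auto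
  ultimately show ?thesis using i by (simp add: fW_letter_spin ops_below_n)
qed

lemma fW_psi_fL_mem_below_n:
  assumes i: "1 \<le> i" "i < n" and column: "\<not> (Pos i \<in> C \<and> Neg (i + 1) \<in> C)"
    and x\<^sub>1: "fL n i x = Some x\<^sub>1" and x_mem: "x \<in> C"
  shows "fW n i [L y, S D] = Some [L (least_upper n C x\<^sub>1), S D]"
proof -
  have x: "x = Pos i \<and> x\<^sub>1 = Pos (i + 1) \<or> x = Neg (i + 1) \<and> x\<^sub>1 = Neg i"
    using x\<^sub>1 i by (auto simp: ops_below_n split: if_splits)
  then have "x\<^sub>1 \<in> C" "epsS n i C = 0"
    using x_mem column spin_Pos_iff_Neg_notin[OF spin, of i]
      spin_Pos_iff_Neg_notin[OF spin, of "i + 1"] i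
    by (auto simp: ops_below_n)
  then show ?thesis
    using x x_mem i least_upper_self[OF spin] y_eq_x D_eq_C
    by (auto simp: fW_letter_spin ops_below_n)
qed

lemma y_beyond_below_n:
  assumes i: "1 \<le> i" "i < n" and x: "x = Pos i \<or> x = Neg (i + 1)" and x_notin: "x \<notin> C"
  shows "rank n x < rank n y" "y \<noteq> Pos i" "y \<noteq> Neg (i + 1)"
proof -
  show y_x: "rank n x < rank n y"
    using x_notin rank_x_le_y y_neq_x rank_eq_iff[OF valid_y valid_x] by fastforce
  then show "y \<noteq> Pos i" "y \<noteq> Neg (i + 1)" using x i y_le_Zero by auto
qed

lemma fS_pair_mem_D_below_n:
  assumes i: "1 \<le> i" "i < n" and x: "x = Pos i \<or> x = Neg (i + 1)" and x_notin: "x \<notin> C"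
  shows "Pos i \<in> D \<and> Neg (i + 1) \<in> D"
proof (cases "x = Pos i")
  case True
  have "Neg (i + 1) \<in> D"
  proof (cases "y = Pos (i + 1)")
    case False
    then have "Pos (i + 1) \<notin> C" using y_less[of "Pos (i + 1)"] y_beyond_below_n[OF assms] True
      by fastforce
    then show ?thesis
      using D_keep[of "Neg (i + 1)"] spin_Pos_iff_Neg_notin[OF spin, of "i + 1"]
        y_beyond_below_n[OF assms]
        True i by auto
  qed (use bar_y_mem_D x_notin True in auto)
  then show ?thesis using x_mem_D True by simp
next
  case False
  then have x_Neg: "x = Neg (i + 1)" using x by simp
  have "Pos i \<in> D"
  proof (cases "y = Neg i")
    case False
    then have "Neg i \<notin> C" using y_less[of "Neg i"] y_beyond_below_n[OF assms] x_Neg i by fastforce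
    then show ?thesis
      using D_keep[of "Pos i"] spin_Pos_iff_Neg_notin[OF spin, of i] y_beyond_below_n[OF assms]
        x_Neg i
      by auto
  qed (use bar_y_mem_D x_notin x_Neg in auto)
  then show ?thesis using x_mem_D x_Neg by simp
qed

lemma fW_psi_fL_below_n:
  assumes i: "1 \<le> i" "i < n" and x\<^sub>1: "fL n i x = Some x\<^sub>1" and x_notin: "x \<notin> C"
  shows "\<exists>D'. fW n i [L y, S D] = Some [L (least_upper n C x\<^sub>1), S D']"
proof -
  have x: "x = Pos i \<and> x\<^sub>1 = Pos (i + 1) \<or> x = Neg (i + 1) \<and> x\<^sub>1 = Neg i"
    using x\<^sub>1 i by (auto simp: ops_below_n split: if_splits)
  then have x': "x = Pos i \<or> x = Neg (i + 1)" by auto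
  have "least_upper n C x\<^sub>1 = y"
    using x i y_beyond_below_n[OF i x' x_notin] y_mem by (intro least_upper_eq_y) auto
  then show ?thesis
    using y_beyond_below_n[OF i x' x_notin] fS_pair_mem_D_below_n[OF i x' x_notin] i
    by (auto simp: fW_letter_spin ops_below_n)
qed

lemma fW_psi_inert_below_n:
  assumes i: "1 \<le> i" "i < n" and column: "\<not> (Pos i \<in> C \<and> Neg (i + 1) \<in> C)"
    and x: "x \<noteq> Pos i" "x \<noteq> Neg (i + 1)"
  shows "fW n i [L y, S D] = None"
proof (cases "x \<in> C")
  case True
  then show ?thesis using x column i y_eq_x D_eq_C by (simp add: fW_letter_spin ops_below_n)
next
  case x_notin: False
  note PN = spin_Pos_iff_Neg_notin[OF spin]
  show ?thesis
  proof (cases "y = Pos i \<or> y = Neg (i + 1)")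
    case True
    then have "y \<in> C" using y_mem by auto
    then have "Pos (i + 1) \<in> D \<and> Neg i \<in> D"
      using True column PN[of i] PN[of "i + 1"] i x D_keep bar_y_mem_D y_neq_x[OF x_notin]
      by auto
    moreover have "y \<notin> D" using D_excludes y_neq_x[OF x_notin] by blast
    ultimately show ?thesis using True i by (auto simp: fW_letter_spin ops_below_n)
  next
    case False
    have "\<not> (Pos i \<in> D \<and> Neg (i + 1) \<in> D)"
    proof
      assume "Pos i \<in> D \<and> Neg (i + 1) \<in> D"
      then have "Pos i \<in> C \<or> y = Neg i" "Neg (i + 1) \<in> C \<or> y = Pos (i + 1)"
        using D_subset[of "Pos i"] D_subset[of "Neg (i + 1)"] x by auto
      moreover have "rank n y \<le> i \<or> i < rank n x" if "Pos i \<in> C"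
        using y_least[OF that] by force
      moreover have "rank n y \<le> 2 * n + 1 - i \<or> 2 * n + 1 - i < rank n x" if "Neg (i + 1) \<in> C"
        using y_least[OF that] i by force
      ultimately show False
        using column rank_x_le_y y_neq_x[OF x_notin] valid_x i by (cases x) auto
    qed
    then show ?thesis using False i by (auto simp: fW_letter_spin ops_below_n)
  qed
qed

lemma n_pos: "1 \<le> n"
proof -
  obtain t where "t \<in> C" using below by blast
  then have "valid_letter n t" "t \<noteq> Zero" using spin_valid_letter[OF spin] spin_Zero_notin[OF spin]
    by auto
  then show ?thesis by (cases t) auto
qed

lemma least_upper_fS_at_n:
  assumes column: "Pos n \<in> C" and x: "x \<noteq> Zero" "x \<noteq> Neg n"
  shows "least_upper n (insert (Neg n) (C - {Pos n})) x = (if y = Pos n then Zero else y)"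
    (is "least_upper n ?C\<^sub>1 x = ?z")
proof (rule least_upper_eqI)
  have "fS n n C = Some ?C\<^sub>1" using column n_pos by (simp add: ops_at_n)
  then show "is_spin n ?C\<^sub>1" using fS_spin[OF spin] by blast
  have x_rank: "rank n x \<le> n \<or> n + 2 < rank n x" using x valid_x by (cases x) auto
  have y_Pos: "rank n x \<le> n \<Longrightarrow> rank n y \<le> n" using y_least[OF column] by simp
  have "y \<noteq> Zero" using y_mem y_Pos x_rank spin_Zero_notin[OF spin] by auto
  then show "?z \<in> upper_set n ?C\<^sub>1 x"
    using y_mem rank_x_le_y y_Pos by (auto simp: mem_upper_set_iff)
  show "\<forall>s\<in>upper_set n ?C\<^sub>1 x. rank n ?z \<le> rank n s"
  proof
    fix s assume "s \<in> upper_set n ?C\<^sub>1 x"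
    then consider "s = Neg n" "rank n x \<le> n + 2" | "s \<in> C" "s \<noteq> Pos n" "rank n x \<le> rank n s"
      | "s = Zero" "rank n x \<le> n"
      by (auto simp: mem_upper_set_iff)
    then show "rank n ?z \<le> rank n s"
    proof cases
      case 2
      then have "rank n y \<le> rank n s" "valid_letter n s" "s \<noteq> Zero"
        using y_least spin_valid_letter[OF spin] spin_Zero_notin[OF spin] by auto
      then show ?thesis using 2(2) by (cases s) auto
    qed (use x_rank y_Pos in auto)
  qed
qed

lemma fW_psi_fS_at_n:
  assumes column: "Pos n \<in> C" and x: "x \<noteq> Zero" "x \<noteq> Neg n"
  shows "\<exists>D'. fW n n [L y, S D] = Some [L (least_upper n (insert (Neg n) (C - {Pos n})) x), S D']"
proof (cases "y = Pos n")
  case True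
  then show ?thesis using least_upper_fS_at_n[OF assms] n_pos
    by (auto simp: fW_letter_spin ops_at_n)
next
  case False
  have "y \<noteq> Zero"
    using y_mem y_least[OF column] x valid_x spin_Zero_notin[OF spin] by (cases x) auto
  moreover have "Pos n \<in> D" using D_keep[OF column] False x by auto
  ultimately show ?thesis
    using False least_upper_fS_at_n[OF assms] n_pos by (auto simp: fW_letter_spin ops_at_n)
qed

lemma fW_psi_None_at_n:
  assumes column: "Pos n \<in> C" and x: "x = Neg n"
  shows "fW n n [L y, S D] = None"
proof -
  have "y \<noteq> x" using column x y_mem spin_Pos_iff_Neg_notin[OF spin, of n] n_pos by auto
  then have "Pos n \<notin> D" using D_excludes x by auto
  moreover have "phiL n n y = 0" using rank_x_le_y x valid_y n_pos
    by (cases y) (auto simp: ops_at_n)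
  ultimately show ?thesis using n_pos by (simp add: fW_letter_spin ops_at_n)
qed

lemma fW_psi_fL_Zero_at_n:
  assumes column: "Pos n \<in> C" and x: "x = Zero"
  shows "\<exists>D'. fW n n [L y, S D] = Some [L (least_upper n C (Neg n)), S D']"
proof -
  have "y \<in> C" using y_mem x by auto
  then have y_rank: "n + 2 \<le> rank n y"
    using rank_x_le_y x spin_rank_ne_Zero[OF spin, of y] by fastforce
  then have "least_upper n C (Neg n) = y"
    using x spin_rank_ne_Zero[OF spin] by (intro least_upper_eq_y) force+
  moreover have "y \<noteq> Pos n" using y_rank by (intro notI) simp
  then have "Pos n \<in> D" using D_keep[OF column] x by auto
  moreover have "phiL n n y = 0" using y_rank n_pos by (auto simp: ops_at_n)
  ultimately show ?thesis using n_pos by (auto simp: fW_letter_spin ops_at_n)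
qed

lemma fW_psi_fL_at_n:
  assumes column: "Pos n \<notin> C" and x\<^sub>1: "fL n n x = Some x\<^sub>1"
  shows "\<exists>D'. fW n n [L y, S D] = Some [L (least_upper n C x\<^sub>1), S D']"
proof -
  have x: "x = Pos n \<and> x\<^sub>1 = Zero \<or> x = Zero \<and> x\<^sub>1 = Neg n"
    using x\<^sub>1 n_pos by (auto simp: ops_at_n split: if_splits)
  have Neg_n: "Neg n \<in> C" using column spin_Pos_iff_Neg_notin[OF spin, of n] n_pos by simp
  have upper_Zero: "least_upper n C Zero = Neg n"
    using Neg_n spin_rank_ne_Zero[OF spin] spin_valid_letter[OF spin]
    by (intro least_upper_eqI[OF spin]) (force simp: mem_upper_set_iff elim: valid_letter.elims)+
  from x show ?thesis
  proof
    assume x_Pos: "x = Pos n \<and> x\<^sub>1 = Zero"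
    have "y = Zero"
      using column x_Pos spin_rank_ne_Zero[OF spin] spin_valid_letter[OF spin]
      by (intro least_upper_eqI[OF spin]) (force simp: mem_upper_set_iff elim: valid_letter.elims)+
    moreover have "Neg n \<notin> D" using D_excludes x_Pos \<open>y = Zero\<close> by auto
    ultimately show ?thesis using x_Pos upper_Zero n_pos by (simp add: fW_letter_spin ops_at_n)
  next
    assume x_Zero: "x = Zero \<and> x\<^sub>1 = Neg n"
    then have "y = Neg n" "least_upper n C x\<^sub>1 = Neg n"
      using upper_Zero least_upper_self[OF spin Neg_n] by auto
    moreover from this have "Pos n \<in> D" using bar_y_mem_D x_Zero by auto
    ultimately show ?thesis using n_pos by (auto simp: fW_letter_spin ops_at_n)
  qed
qed

lemma fW_psi_inert_at_n:
  assumes column: "Pos n \<notin> C" and x: "x \<noteq> Pos n" "x \<noteq> Zero"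
  shows "fW n n [L y, S D] = None"
proof (cases "x \<in> C")
  case True
  then show ?thesis using column x y_eq_x D_eq_C n_pos by (simp add: fW_letter_spin ops_at_n)
next
  case x_notin: False
  have Neg_n: "Neg n \<in> C" using column spin_Pos_iff_Neg_notin[OF spin, of n] n_pos by simp
  have "y \<noteq> Neg n"
  proof
    assume "y = Neg n"
    then have "x = Neg n" using rank_x_le_y y_le_Zero x valid_x by (cases x) auto
    then show False using x_notin Neg_n by simp
  qed
  moreover have "y \<noteq> Pos n" using y_mem column by auto
  moreover have "Pos n \<notin> D" using D_subset[of "Pos n"] column x \<open>y \<noteq> Neg n\<close> by auto
  moreover have "y = Zero \<Longrightarrow> Neg n \<in> D" using D_keep[OF Neg_n] x by auto
  ultimately show ?thesis using n_pos by (auto simp: fW_letter_spin ops_at_n)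
qed

lemma fW_psi_below_n:
  assumes i: "1 \<le> i" "i < n"
  shows "fW n i [S C, L x] = None \<and> fW n i [L y, S D] = None \<or>
    (\<exists>C\<^sub>1 x\<^sub>1 D'. fW n i [S C, L x] = Some [S C\<^sub>1, L x\<^sub>1] \<and>
                fW n i [L y, S D] = Some [L (least_upper n C\<^sub>1 x\<^sub>1), S D'])"
proof (cases "Pos i \<in> C \<and> Neg (i + 1) \<in> C")
  case True
  show ?thesis
  proof (cases "x = Pos (i + 1) \<or> x = Neg i")
    case blocked: True
    then have "fW n i [S C, L x] = None" using True i by (auto simp: fW_spin_letter ops_below_n)
    then show ?thesis
      using fW_psi_None_below_n[OF i True[THEN conjunct1] True[THEN conjunct2] blocked]
      by simp
  next
    case False
    then have "fW n i [S C, L x] =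
        Some [S (insert (Pos (i + 1)) (insert (Neg i) (C - {Pos i, Neg (i + 1)}))), L x]"
      using True i by (simp add: fW_spin_letter ops_below_n)
    then show ?thesis using fW_psi_fS_below_n[OF i] True False by blast
  qed
next
  case False
  show ?thesis
  proof (cases "fL n i x")
    case None
    then have "x \<noteq> Pos i" "x \<noteq> Neg (i + 1)" using i by (auto simp: ops_below_n)
    moreover have "fW n i [S C, L x] = None" using False None i
      by (simp add: fW_spin_letter ops_below_n split: if_splits)
    ultimately show ?thesis using fW_psi_inert_below_n[OF i False] by simp
  next
    case (Some x\<^sub>1)
    then have "fW n i [S C, L x] = Some [S C, L x\<^sub>1]"
      using False i by (auto simp: fW_spin_letter ops_below_n split: if_splits)
    then show ?thesis
      using fW_psi_fL_mem_below_n[OF i False Some] fW_psi_fL_below_n[OF i Some]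
      by (cases "x \<in> C") auto
  qed
qed

lemma fW_psi_at_n:
  "fW n n [S C, L x] = None \<and> fW n n [L y, S D] = None \<or>
    (\<exists>C\<^sub>1 x\<^sub>1 D'. fW n n [S C, L x] = Some [S C\<^sub>1, L x\<^sub>1] \<and>
                fW n n [L y, S D] = Some [L (least_upper n C\<^sub>1 x\<^sub>1), S D'])"
proof (cases "Pos n \<in> C")
  case True
  consider "x = Zero" | "x = Neg n" | "x \<noteq> Zero" "x \<noteq> Neg n" by blast
  then show ?thesis
  proof cases
    case 1
    then have "fW n n [S C, L x] = Some [S C, L (Neg n)]"
      using True n_pos by (simp add: fW_spin_letter ops_at_n)
    then show ?thesis using fW_psi_fL_Zero_at_n[OF True 1] by blast
  next
    case 2
    then have "fW n n [S C, L x] = None" using True n_pos by (simp add: fW_spin_letter ops_at_n)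
    then show ?thesis using fW_psi_None_at_n[OF True 2] by simp
  next
    case 3
    then have "fW n n [S C, L x] = Some [S (insert (Neg n) (C - {Pos n})), L x]"
      using True n_pos by (simp add: fW_spin_letter ops_at_n)
    then show ?thesis using fW_psi_fS_at_n[OF True 3] by blast
  qed
next
  case False
  show ?thesis
  proof (cases "fL n n x")
    case None
    then have "x \<noteq> Pos n" "x \<noteq> Zero" using n_pos by (auto simp: ops_at_n)
    moreover have "fW n n [S C, L x] = None" using False None n_pos
      by (simp add: fW_spin_letter ops_at_n)
    ultimately show ?thesis using fW_psi_inert_at_n[OF False] by simp
  next
    case (Some x\<^sub>1)
    then have "fW n n [S C, L x] = Some [S C, L x\<^sub>1]"
      using False n_pos by (simp add: fW_spin_letter ops_at_n split: if_splits)
    then show ?thesis using fW_psi_fL_at_n[OF False Some] by blast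
  qed
qed

end

lemma non_tri_words_iff:
  assumes "1 \<le> n"
  shows "w \<in> spin_letter_words n - tri_words n \<longleftrightarrow>
    (\<exists>C x. w = [S C, L x] \<and> non_tri_letter n C x)"
  using tri_iff[OF _ assms]
  by (auto simp: spin_letter_words_def tri_words_def non_tri_letter_def not_less)

lemma psi_non_tri_valid_wtW:
  assumes "1 \<le> n" "w \<in> spin_letter_words n - tri_words n"
  shows "valid_word n (psi_non_tri n w) \<and> wtW (psi_non_tri n w) = wtW w"
proof -
  obtain C x where w: "w = [S C, L x]" and "non_tri_letter n C x"
    using assms non_tri_words_iff by blast
  then interpret non_tri_letter n C x by simp
  show ?thesis using w D_spin_weight valid_y by (auto simp: fun_eq_iff)
qed

lemma fW_psi_non_tri:
  assumes n: "1 \<le> n" and w: "w \<in> spin_letter_words n - tri_words n" and i: "i \<in> {1..n}"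
  shows "fW n i (psi_non_tri n w) = map_option (psi_non_tri n) (fW n i w)"
proof -
  obtain C x where w_def: "w = [S C, L x]" and "non_tri_letter n C x"
    using w non_tri_words_iff[OF n] by blast
  then interpret non_tri_letter n C x by simp
  have "fW n i [S C, L x] = None \<and> fW n i [L y, S D] = None \<or>
    (\<exists>C\<^sub>1 x\<^sub>1 D'. fW n i [S C, L x] = Some [S C\<^sub>1, L x\<^sub>1] \<and>
                fW n i [L y, S D] = Some [L (least_upper n C\<^sub>1 x\<^sub>1), S D'])"
    using fW_psi_below_n fW_psi_at_n i by (cases "i = n") auto
  then show ?thesis
  proof
    assume "fW n i [S C, L x] = None \<and> fW n i [L y, S D] = None"
    then show ?thesis using w_def by simp
  next
    assume "\<exists>C\<^sub>1 x\<^sub>1 D'. fW n i [S C, L x] = Some [S C\<^sub>1, L x\<^sub>1] \<and>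
                fW n i [L y, S D] = Some [L (least_upper n C\<^sub>1 x\<^sub>1), S D']"
    then obtain C\<^sub>1 x\<^sub>1 D' where f: "fW n i w = Some [S C\<^sub>1, L x\<^sub>1]"
      and f_psi: "fW n i (psi_non_tri n w) = Some [L (least_upper n C\<^sub>1 x\<^sub>1), S D']"
      using w_def by auto
    have w\<^sub>1: "[S C\<^sub>1, L x\<^sub>1] \<in> spin_letter_words n - tri_words n"
      using crystal_closed_fW[OF crystal_closed_non_tri_words[OF n] w i f] .
    note psi = psi_non_tri_valid_wtW[OF n w] psi_non_tri_valid_wtW[OF n w\<^sub>1]
    have "wtW [L (least_upper n C\<^sub>1 x\<^sub>1), S D'] = wtW (psi_non_tri n [S C\<^sub>1, L x\<^sub>1])"
      using fW_Some[OF _ f_psi i] fW_Some[OF _ f i] psi valid_word_spin_letter_words w by simp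
    moreover have "is_spin n D'" using fW_Some[OF _ f_psi i] psi by simp
    ultimately have "D' = column_exchange C\<^sub>1 x\<^sub>1 (least_upper n C\<^sub>1 x\<^sub>1)"
      using spin_eq_iff_wtS_eq psi by (auto simp: fun_eq_iff)
    then show ?thesis using f f_psi by simp
  qed
qed

theorem crystal_iso_psi_non_tri:
  assumes n: "1 \<le> n"
  shows "crystal_iso n (component n [S (Cn n), L (Pos 1)]) (component n [L (Pos 1), S (Cn n)])
           (psi_non_tri n)"
proof -
  note component = component_non_tri_words[OF n]
  interpret fW_equivariant n "[S (Cn n), L (Pos 1)]" "psi_non_tri n"
  proof
    fix w assume "w \<in> component n [S (Cn n), L (Pos 1)]"
    then have w: "w \<in> spin_letter_words n - tri_words n" using component by simp
    show "valid_word n (psi_non_tri n w)" "wtW (psi_non_tri n w) = wtW w"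
      using psi_non_tri_valid_wtW[OF n w] by auto
    show "fW n i (psi_non_tri n w) = map_option (psi_non_tri n) (fW n i w)" if "i \<in> {1..n}" for i
      using fW_psi_non_tri[OF n w that] .
  qed (use Cn_spin n in simp)
  have image: "psi_non_tri n [S (Cn n), L (Pos 1)] = [L (Pos 1), S (Cn n)]"
    using least_upper_self[OF Cn_spin, of "Pos 1" n] n by (simp add: column_exchange_def)
  have "crystal_iso n (component n [S (Cn n), L (Pos 1)])
      (component n (psi_non_tri n [S (Cn n), L (Pos 1)])) (psi_non_tri n)"
  proof (rule crystal_iso_component)
    show "highest_weight n [S (Cn n), L (Pos 1)]"
      using highest_weight_spin_letter_iff[OF n Cn_spin] n by simp
    show "w = [S (Cn n), L (Pos 1)]"
      if "w \<in> component n [S (Cn n), L (Pos 1)]" "highest_weight n w" for w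
      using highest_weight_in_non_tri_words[OF n] that component by simp
  qed
  then show ?thesis unfolding image .
qed

lemma crystal_iso_non_tri_image:
  assumes n: "1 \<le> n"
    and iso: "crystal_iso n (component n [S (Cn n), L (Pos 1)])
                (component n [L (Pos 1), S (Cn n)]) \<Psi>'"
    and C: "is_spin n C" "valid_letter n x" "\<not> tri n x C"
  shows "\<exists>x' C'. x' \<in> upper_set n C x \<and> (\<forall>t\<in>upper_set n C x. rank n x' \<le> rank n t) \<and>
           is_spin n C' \<and> (\<forall>j. wtS C' j = wtS C j + wtL x j - wtL x' j) \<and>
           \<Psi>' [S C, L x] = [L x', S C']"
proof -
  have w: "[S C, L x] \<in> component n [S (Cn n), L (Pos 1)]"
    using C component_non_tri_words[OF n] by (auto simp: spin_letter_words_def tri_words_def)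
  then interpret non_tri_letter n C x
    using non_tri_words_iff[OF n] component_non_tri_words[OF n] by auto
  have "\<Psi>' [S C, L x] = psi_non_tri n [S C, L x]"
  proof (rule crystal_iso_unique[OF iso crystal_iso_psi_non_tri[OF n] _ _ w])
    show "highest_weight n [S (Cn n), L (Pos 1)]"
      using highest_weight_spin_letter_iff[OF n Cn_spin] n by simp
    show "u = [S (Cn n), L (Pos 1)]"
      if "u \<in> component n [S (Cn n), L (Pos 1)]" "highest_weight n u" for u
      using highest_weight_in_non_tri_words[OF n] that component_non_tri_words[OF n] by simp
  qed
  then show ?thesis using least_upper_mem[OF spin below] least_upper_le[OF spin below] D_spin_weight
    by auto
qed

theorem mainTheorem16:
  fixes n :: nat
  assumes "n \<ge> 2"
  shows
    "component n [S (Cn n), L Zero] =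
       {[S C, L x] | C x. is_spin n C \<and> valid_letter n x \<and> tri n x C}
   \<and>
     component n [S (Cn n), L (Pos 1)] =
       {[S C, L x] | C x. is_spin n C \<and> valid_letter n x \<and> \<not> tri n x C}
   \<and>
     (\<exists>\<Psi>. crystal_iso n (component n [S (Cn n), L Zero]) (component n [S (Cn n)]) \<Psi>)
   \<and>
     (\<forall>\<Psi>. crystal_iso n (component n [S (Cn n), L Zero]) (component n [S (Cn n)]) \<Psi> \<longrightarrow>
        (\<forall>C x. is_spin n C \<and> valid_letter n x \<and> tri n x C \<longrightarrow>
           (\<exists>C'. is_spin n C' \<and> (\<forall>j. wtS C' j = wtS C j + wtL x j) \<and>
                 \<Psi> [S C, L x] = [S C'])))
   \<and>
     (\<exists>\<Psi>'. crystal_iso n (component n [S (Cn n), L (Pos 1)])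
                          (component n [L (Pos 1), S (Cn n)]) \<Psi>')
   \<and>
     (\<forall>\<Psi>'. crystal_iso n (component n [S (Cn n), L (Pos 1)])
                          (component n [L (Pos 1), S (Cn n)]) \<Psi>' \<longrightarrow>
        (\<forall>C x. is_spin n C \<and> valid_letter n x \<and> \<not> tri n x C \<longrightarrow>
           (let T = (if rank n Zero \<le> rank n x then {t \<in> C. rank n x \<le> rank n t}
                     else {t \<in> C. rank n x \<le> rank n t} \<union> {Zero})
            in \<exists>x' C'. x' \<in> T \<and> (\<forall>t\<in>T. rank n x' \<le> rank n t) \<and>
                 is_spin n C' \<and> (\<forall>j. wtS C' j = wtS C j + wtL x j - wtL x' j) \<and>
                 \<Psi>' [S C, L x] = [L x', S C'])))"
proof -
  have n: "1 \<le> n" using assms by simp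
  have "spin_letter_words n - tri_words n =
      {[S C, L x] | C x. is_spin n C \<and> valid_letter n x \<and> \<not> tri n x C}"
    by (auto simp: spin_letter_words_def tri_words_def)
  then show ?thesis
    unfolding Let_def upper_set_def[symmetric]
    using component_tri_words[OF n] component_non_tri_words[OF n]
      crystal_iso_psi_tri[OF n] crystal_iso_tri_image[OF n]
      crystal_iso_psi_non_tri[OF n] crystal_iso_non_tri_image[OF n]
    by (auto simp: tri_words_def)
qed


end
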